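(* Let $\nu(dx)=e^{-W(x)}dx$ be a probability measure on $\mathbb R^d$ with $W\in C^1$, and $L_W=\Delta-\nabla W\cdot\nabla$. Assume there exist constants $b,R>0$, a positive continuous function $\phi$ and a $C^2$ function $F\ge1$ with $\frac{L_WF}{F}\le-\phi+b\mathbf 1_{B(0,R)}$. Let $U$ be smooth such that $\mu=e^{-U}\nu$ is a probability measure, and assume that $\phi_U(x)=\phi(x)+\frac{\langle\nabla U(x),\nabla F(x)\rangle}{F(x)}>0$ for all $|x|$ large enough. Set $h_U(r)=e^{-\inf_{\{\phi_U\le1/r\}}U}\,\nu(\phi_U\le1/r)$. Then there exists a constant $C>0$ such that $\mu$ satisfies a weak Poincaré inequality with rate $\beta_\mu(s)=C\,h_U^{-1}(s)$.
   Context: A probability measure $\mu$ on $\mathbb R^d$ satisfies a weak Poincaré inequality with rate $\beta_\mu$ if $\beta_\mu:(0,\infty)\to(0,\infty]$ is non-increasing and for all $s>0$ and all smooth bounded $f$, $\mathrm{Var}_\mu(f)\le \beta_\mu(s)\int|\nabla f|^2d\mu+s\,\mathrm{Osc}^2(f)$, where $\mathrm{Osc}(f)=\sup f-\inf f$. $h_U^{-1}$ denotes the generalized inverse of the non-increasing function $h_U$. *)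

theory Defs
  imports "HOL-Probability.Probability"
begin

definition pd :: "('a::euclidean_space \<Rightarrow> real) \<Rightarrow> 'a \<Rightarrow> 'a \<Rightarrow> real" where
  "pd f i x = frechet_derivative f (at x) i"

definition grad :: "('a::euclidean_space \<Rightarrow> real) \<Rightarrow> 'a \<Rightarrow> 'a" where
  "grad f x = (\<Sum>i\<in>Basis. pd f i x *\<^sub>R i)"

definition lap :: "('a::euclidean_space \<Rightarrow> real) \<Rightarrow> 'a \<Rightarrow> real" where
  "lap f x = (\<Sum>i\<in>Basis. pd (pd f i) i x)"

definition LW :: "('a::euclidean_space \<Rightarrow> real) \<Rightarrow> ('a \<Rightarrow> real) \<Rightarrow> 'a \<Rightarrow> real" where
  "LW W f x = lap f x - grad W x \<bullet> grad f x"

fun Ck :: "nat \<Rightarrow> ('a::euclidean_space \<Rightarrow> real) \<Rightarrow> bool" where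
  "Ck 0 f = continuous_on UNIV f"
| "Ck (Suc k) f = ((\<forall>x. f differentiable (at x)) \<and> continuous_on UNIV f \<and> (\<forall>i\<in>Basis. Ck k (pd f i)))"

definition smooth :: "('a::euclidean_space \<Rightarrow> real) \<Rightarrow> bool" where
  "smooth f = (\<forall>k. Ck k f)"

definition Osc :: "('a \<Rightarrow> real) \<Rightarrow> real" where
  "Osc f = Sup (range f) - Inf (range f)"

definition Var :: "'a measure \<Rightarrow> ('a \<Rightarrow> real) \<Rightarrow> real" where
  "Var M f = (\<integral>x. (f x - (\<integral>y. f y \<partial>M))\<^sup>2 \<partial>M)"

definition weak_poincare :: "'a::euclidean_space measure \<Rightarrow> (real \<Rightarrow> ennreal) \<Rightarrow> bool" where
  "weak_poincare M \<beta> \<longleftrightarrow>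
     (\<forall>s t. 0 < s \<longrightarrow> s \<le> t \<longrightarrow> \<beta> t \<le> \<beta> s) \<and>
     (\<forall>s>0. \<forall>f. smooth f \<and> bounded (range f) \<longrightarrow>
        ennreal (Var M f) \<le> \<beta> s * (\<integral>\<^sup>+x. ennreal ((norm (grad f x))\<^sup>2) \<partial>M)
                             + ennreal (s * (Osc f)\<^sup>2))"

text \<open>h_U(r) = exp(- inf_{phi_U <= 1/r} U) * nu(phi_U <= 1/r); note exp(-inf U) = sup exp(-U),
  with the conventions exp(-(+\<infinity>)) = 0 for the empty set and exp(-(-\<infinity>)) = \<infinity>.\<close>
definition hU :: "'a measure \<Rightarrow> ('a \<Rightarrow> real) \<Rightarrow> ('a \<Rightarrow> real) \<Rightarrow> real \<Rightarrow> ennreal" where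
  "hU \<nu> U \<phi>U r = (SUP x\<in>{x. \<phi>U x \<le> 1 / r}. ennreal (exp (- U x))) * emeasure \<nu> {x. \<phi>U x \<le> 1 / r}"

text \<open>Generalized inverse of a non-increasing function h on (0,\<infinity>): inf {r>0. h r \<le> s}
  (= \<infinity> if the set is empty).\<close>
definition gen_inv :: "(real \<Rightarrow> ennreal) \<Rightarrow> real \<Rightarrow> ennreal" where
  "gen_inv h s = (INF r\<in>{r. 0 < r \<and> h r \<le> ennreal s}. ennreal r)"

end

(* The proof is a localisation argument.  With \<rho> = exp (- U - W) the density of \<mu>, the
   generator of \<mu> is L = L_W - \<nabla>U \<bullet> \<nabla>, and the Lyapunov condition reads
   - L F / F \<ge> \<phi>_U - b 1_{B(0,R)}.  Integrating - L F / F against g\<^sup>2 by parts gives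
   \<integral> g\<^sup>2 (- L F / F) d\<mu> \<le> \<integral> |\<nabla>g|\<^sup>2 d\<mu> for compactly supported g.  Apply this to
   g = (f - c) \<chi>_N with a cutoff \<chi>_N.  Where \<phi>_U > 1/r one has (f - c)\<^sup>2 \<le> r \<phi>_U (f - c)\<^sup>2,
   which is thus bounded by r times the energy; on a ball containing B(0,R) and {\<phi>_U < 0} a
   local Poincare inequality (proved by averaging over segments) does the same; the rest of
   {\<phi>_U \<le> 1/r} costs at most \<mu>(\<phi>_U \<le> 1/r) Osc(f)\<^sup>2 \<le> h_U(r) Osc(f)\<^sup>2.  Letting N \<rightarrow> \<infinity>,
   Var_\<mu>(f) \<le> K r \<integral> |\<nabla>f|\<^sup>2 d\<mu> + h_U(r) Osc(f)\<^sup>2, and taking the infimum over all r with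
   h_U(r) \<le> s gives the rate K h_U\<^sup>-\<^sup>1(s). *)

theory Submission
  imports Defs
begin

section \<open>Gradients and \<open>C\<^sup>k\<close> functions\<close>

lemma grad_inner_Basis: "i \<in> Basis \<Longrightarrow> grad f x \<bullet> i = pd f i x"
  by (simp add: grad_def inner_sum_left inner_Basis if_distrib cong: if_cong)

lemma has_derivative_grad:
  assumes "f differentiable (at x)"
  shows "(f has_derivative (\<lambda>v. grad f x \<bullet> v)) (at x)"
proof -
  let ?D = "frechet_derivative f (at x)"
  have D: "(f has_derivative ?D) (at x)" using assms frechet_derivative_works by blast
  then have lin: "linear ?D" using has_derivative_linear by blast
  have "?D v = grad f x \<bullet> v" for v
  proof -
    have "?D v = ?D (\<Sum>i\<in>Basis. (v \<bullet> i) *\<^sub>R i)" by (simp add: euclidean_representation)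
    also have "\<dots> = (\<Sum>i\<in>Basis. (v \<bullet> i) * ?D i)"
      using lin by (simp add: linear_sum linear_scale)
    also have "\<dots> = grad f x \<bullet> v"
      by (simp add: grad_def pd_def inner_sum_right mult.commute inner_commute)
    finally show ?thesis .
  qed
  with D show ?thesis by (metis (no_types) ext)
qed

lemma Ck_SucD: "Ck (Suc k) f \<Longrightarrow> Ck k f"
  by (induction k arbitrary: f) auto

lemma Ck1_D:
  assumes "Ck 1 f"
  shows "\<And>x. (f has_derivative (\<lambda>v. grad f x \<bullet> v)) (at x)"
    and "continuous_on UNIV f"
    and "\<And>i. i \<in> Basis \<Longrightarrow> continuous_on UNIV (pd f i)"
    and "continuous_on UNIV (grad f)"
proof -
  from assms have A: "\<forall>x. f differentiable (at x)" "continuous_on UNIV f"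
    "\<forall>i\<in>Basis. continuous_on UNIV (pd f i)"
    by auto
  then show "\<And>x. (f has_derivative (\<lambda>v. grad f x \<bullet> v)) (at x)" "continuous_on UNIV f"
    "\<And>i. i \<in> Basis \<Longrightarrow> continuous_on UNIV (pd f i)"
    using has_derivative_grad by blast+
  show "continuous_on UNIV (grad f)"
    unfolding grad_def[abs_def] using A by (intro continuous_intros) auto
qed

lemma Ck2_D:
  assumes "Ck 2 f"
  shows "Ck 1 f" and "\<And>i. i \<in> Basis \<Longrightarrow> Ck 1 (pd f i)"
  using assms by (auto simp: numeral_2_eq_2 simp del: Ck.simps(2) intro: Ck_SucD)
    (simp_all add: numeral_2_eq_2)

lemma smooth_imp_Ck1: "smooth f \<Longrightarrow> Ck 1 f"
  by (simp add: smooth_def)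

lemma has_real_derivative_along_line:
  assumes "(h has_derivative h') (at (x + t *\<^sub>R v))"
  shows "((\<lambda>\<tau>. h (x + \<tau> *\<^sub>R v)) has_real_derivative h' v) (at t)"
proof -
  have "((\<lambda>\<tau>. x + \<tau> *\<^sub>R v) has_derivative (\<lambda>d. d *\<^sub>R v)) (at t)"
    by (auto intro!: derivative_eq_intros)
  from has_derivative_compose[OF this assms]
  have "((\<lambda>\<tau>. h (x + \<tau> *\<^sub>R v)) has_derivative (\<lambda>d. h' (d *\<^sub>R v))) (at t)" .
  moreover have "h' (d *\<^sub>R v) = h' v * d" for d
    using has_derivative_linear[OF assms] by (simp add: linear_scale)
  ultimately show ?thesis
    by (simp add: has_field_derivative_def mult_commute_abs)
qed

lemma has_derivative_zero_outside_ball: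
  assumes "(h has_derivative h') (at x)" and "\<And>y. norm y \<ge> T \<Longrightarrow> h y = 0" and "norm x > T"
  shows "h' = (\<lambda>_. 0)"
proof -
  have "(h has_derivative (\<lambda>_. 0)) (at x)"
    by (rule has_derivative_transform_within_open[where f="\<lambda>_. 0" and s="{y. norm y > T}"])
       (use assms in \<open>auto intro: open_Collect_less continuous_intros\<close>)
  with assms(1) show ?thesis using has_derivative_unique by blast
qed

lemma grad_zero_outside_ball:
  assumes "\<And>x. (g has_derivative (\<lambda>v. G x \<bullet> v)) (at x)" and "\<And>y. norm y \<ge> T \<Longrightarrow> g y = 0"
    and "norm x > T"
  shows "G x = 0"
  using has_derivative_zero_outside_ball[OF assms] by (metis inner_eq_zero_iff)

section \<open>Integrals of compactly supported derivatives\<close>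

lemma continuous_on_imp_bounded_if_zero_outside:
  fixes g :: "'a::euclidean_space \<Rightarrow> real"
  assumes "continuous_on UNIV g" and "\<And>x. norm x > T \<Longrightarrow> g x = 0"
  obtains M where "M \<ge> 0" and "\<And>x. \<bar>g x\<bar> \<le> M"
proof -
  have "compact (g ` cball 0 T)"
    by (rule compact_continuous_image) (auto intro: continuous_on_subset[OF assms(1)])
  then obtain M where M: "\<And>y. y \<in> g ` cball 0 T \<Longrightarrow> norm y \<le> M"
    using compact_imp_bounded bounded_iff by metis
  have "\<bar>g x\<bar> \<le> max M 0" for x
    using M[of "g x"] assms(2)[of x] by (cases "norm x \<le> T") auto
  then show ?thesis using that[of "max M 0"] by auto
qed

lemma integrable_continuous_zero_outside:
  fixes g :: "'a::euclidean_space \<Rightarrow> real"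
  assumes "continuous_on UNIV g" and "\<And>x. norm x > T \<Longrightarrow> g x = 0"
  shows "integrable lborel g"
proof -
  have "integrable lborel (\<lambda>x. indicator (cball 0 T) x *\<^sub>R g x)"
    by (rule borel_integrable_compact) (auto intro: continuous_on_subset[OF assms(1)])
  moreover have "(\<lambda>x. indicator (cball 0 T) x *\<^sub>R g x) = g"
    using assms(2) by (auto simp: indicator_def fun_eq_iff)
  ultimately show ?thesis by simp
qed

lemma lborel_integral_translate:
  fixes h :: "'a::euclidean_space \<Rightarrow> real"
  assumes [measurable]: "h \<in> borel_measurable borel"
  shows "(\<integral>x. h (x + c) \<partial>lborel) = (\<integral>x. h x \<partial>lborel)"
    and "integrable lborel (\<lambda>x. h (x + c)) \<longleftrightarrow> integrable lborel h"
proof -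
  have "(\<integral>x. h x \<partial>lborel) = (\<integral>x. h x \<partial>distr lborel borel ((+) c))"
    by (simp add: lborel_distr_plus)
  also have "\<dots> = (\<integral>x. h (c + x) \<partial>lborel)"
    by (rule integral_distr) auto
  finally show "(\<integral>x. h (x + c) \<partial>lborel) = (\<integral>x. h x \<partial>lborel)"
    by (simp add: add.commute)
  have "integrable lborel h \<longleftrightarrow> integrable (distr lborel borel ((+) c)) h"
    by (simp add: lborel_distr_plus)
  also have "\<dots> \<longleftrightarrow> integrable lborel (\<lambda>x. h (c + x))"
    by (rule integrable_distr_eq) auto
  finally show "integrable lborel (\<lambda>x. h (x + c)) \<longleftrightarrow> integrable lborel h"
    by (simp add: add.commute)
qed

lemma abs_difference_quotient_le:
  fixes h :: "'a::euclidean_space \<Rightarrow> real"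
  assumes deriv: "\<And>x. (h has_derivative h' x) (at x)" and bound: "\<And>y. \<bar>h' y v\<bar> \<le> M" and t: "t > 0"
  shows "\<bar>(h (x + t *\<^sub>R v) - h x) / t\<bar> \<le> M"
proof -
  obtain z where "h (x + t *\<^sub>R v) - h (x + 0 *\<^sub>R v) = (t - 0) * h' (x + z *\<^sub>R v) v"
    using MVT2[of 0 t "\<lambda>\<tau>. h (x + \<tau> *\<^sub>R v)" "\<lambda>\<tau>. h' (x + \<tau> *\<^sub>R v) v"] t
      has_real_derivative_along_line[OF deriv]
    by blast
  then show ?thesis using bound[of "x + z *\<^sub>R v"] t by simp
qed

text \<open>Integrating the difference quotients in direction \<open>v\<close> gives zero by translation
  invariance, and they converge boundedly to the directional derivative.\<close>
lemma integral_directional_derivative_eq_0: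
  fixes h :: "'a::euclidean_space \<Rightarrow> real"
  assumes deriv: "\<And>x. (h has_derivative h' x) (at x)"
    and cont: "continuous_on UNIV (\<lambda>x. h' x v)"
    and supp: "\<And>x. norm x \<ge> T \<Longrightarrow> h x = 0"
  shows "(\<integral>x. h' x v \<partial>lborel) = 0"
proof -
  have hcont: "continuous_on UNIV h"
    using deriv by (meson continuous_at_imp_continuous_on has_derivative_continuous)
  have [measurable]: "h \<in> borel_measurable borel"
    using hcont by (rule borel_measurable_continuous_onI)
  have line: "((\<lambda>\<tau>. h (x + \<tau> *\<^sub>R v)) has_real_derivative h' (x + \<tau> *\<^sub>R v) v) (at \<tau>)" for x \<tau>
    by (rule has_real_derivative_along_line[OF deriv])
  obtain M where M0: "M \<ge> 0" and M: "\<And>x. \<bar>h' x v\<bar> \<le> M"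
    using continuous_on_imp_bounded_if_zero_outside[OF cont]
      has_derivative_zero_outside_ball[OF deriv supp] by (metis order_less_imp_le)
  have hint: "integrable lborel h"
    using integrable_continuous_zero_outside[OF hcont] supp by (meson order_less_imp_le)
  define t :: "nat \<Rightarrow> real" where "t n = 1 / Suc n" for n
  have tpos: "t n > 0" "t n \<le> 1" for n by (auto simp: t_def field_simps)
  define q where "q n x = (h (x + t n *\<^sub>R v) - h x) / t n" for n x
  have int_q: "(\<integral>x. q n x \<partial>lborel) = 0" for n
    using hint lborel_integral_translate[of h "t n *\<^sub>R v"]
    by (simp add: q_def Bochner_Integration.integral_diff)
  have lim: "(\<lambda>n. q n x) \<longlonglongrightarrow> h' x v" for x
  proof -
    have "((\<lambda>\<tau>. (h (x + \<tau> *\<^sub>R v) - h x) / \<tau>) \<longlongrightarrow> h' x v) (at 0)"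
      using line[of x 0] unfolding has_field_derivative_iff by simp
    moreover have "filterlim t (at 0) sequentially"
      unfolding filterlim_at t_def
      using LIMSEQ_Suc[OF lim_1_over_n] by (auto intro!: always_eventually)
    ultimately show ?thesis unfolding q_def by (rule filterlim_compose)
  qed
  have bound: "\<bar>q n x\<bar> \<le> M * indicator (cball 0 (T + norm v)) x" for n x
  proof (cases "norm x \<le> T + norm v")
    case True
    then show ?thesis using abs_difference_quotient_le[OF deriv M tpos(1)] by (simp add: q_def)
  next
    case False
    have "norm (t n *\<^sub>R v) \<le> norm v" using tpos[of n] by (simp add: mult_left_le_one_le)
    moreover have "norm x - norm (t n *\<^sub>R v) \<le> norm (x + t n *\<^sub>R v)"
      using norm_triangle_ineq2[of x "- (t n *\<^sub>R v)"] by simp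
    ultimately have "norm x \<ge> T" "norm (x + t n *\<^sub>R v) \<ge> T"
      using False norm_ge_zero[of v] by linarith+
    then show ?thesis using supp M0 by (simp add: q_def)
  qed
  have "(\<lambda>n. \<integral>x. q n x \<partial>lborel) \<longlonglongrightarrow> (\<integral>x. h' x v \<partial>lborel)"
  proof (rule integral_dominated_convergence[where w="\<lambda>x. M * indicator (cball 0 (T + norm v)) x"])
    show "(\<lambda>x. h' x v) \<in> borel_measurable lborel"
      using cont by (simp add: borel_measurable_continuous_onI)
    show "integrable lborel (\<lambda>x. M * indicator (cball 0 (T + norm v)) x)"
      by (intro integrable_mult_right integrable_real_indicator emeasure_compact_finite) auto
  qed (use lim bound in \<open>auto simp: q_def\<close>)
  then show ?thesis using int_q LIMSEQ_unique by (simp add: LIMSEQ_const_iff)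
qed

lemma integral_divergence_eq_0:
  fixes h :: "'a::euclidean_space \<Rightarrow> 'a \<Rightarrow> real"
  assumes deriv: "\<And>i x. i \<in> Basis \<Longrightarrow> (h i has_derivative D i x) (at x)"
    and cont: "\<And>i. i \<in> Basis \<Longrightarrow> continuous_on UNIV (\<lambda>x. D i x i)"
    and supp: "\<And>i x. i \<in> Basis \<Longrightarrow> norm x \<ge> T \<Longrightarrow> h i x = 0"
  shows "integrable lborel (\<lambda>x. \<Sum>i\<in>Basis. D i x i)"
    and "(\<integral>x. (\<Sum>i\<in>Basis. D i x i) \<partial>lborel) = 0"
proof -
  have int: "integrable lborel (\<lambda>x. D i x i)" if i: "i \<in> Basis" for i
  proof (rule integrable_continuous_zero_outside[OF cont[OF i]])
    show "D i x i = 0" if "norm x > T" for x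
      using has_derivative_zero_outside_ball[OF deriv[OF i] supp[OF i] that] by simp
  qed
  then show "integrable lborel (\<lambda>x. \<Sum>i\<in>Basis. D i x i)" by simp
  have "(\<integral>x. D i x i \<partial>lborel) = 0" if i: "i \<in> Basis" for i
    using integral_directional_derivative_eq_0[OF deriv[OF i] cont[OF i] supp[OF i]] .
  with int show "(\<integral>x. (\<Sum>i\<in>Basis. D i x i) \<partial>lborel) = 0" by (simp add: integral_sum)
qed

lemma inner_quotient_le_norm_sq:
  fixes G v :: "'a::real_inner" and g F :: real
  assumes "F \<noteq> 0"
  shows "2 * g * (G \<bullet> v) / F - g\<^sup>2 * (norm v)\<^sup>2 / F\<^sup>2 \<le> (norm G)\<^sup>2"
proof -
  have "(norm (G - (g / F) *\<^sub>R v))\<^sup>2 = (norm G)\<^sup>2 - 2 * (g / F) * (G \<bullet> v) + (g / F)\<^sup>2 * (norm v)\<^sup>2"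
    unfolding power2_norm_eq_inner
    by (simp add: inner_diff_left inner_diff_right inner_commute power2_eq_square algebra_simps)
  moreover have "2 * (g / F) * (G \<bullet> v) - (g / F)\<^sup>2 * (norm v)\<^sup>2
      = 2 * g * (G \<bullet> v) / F - g\<^sup>2 * (norm v)\<^sup>2 / F\<^sup>2"
    by (simp add: power_divide)
  ultimately show ?thesis using zero_le_power2[of "norm (G - (g / F) *\<^sub>R v)"] by linarith
qed

text \<open>With \<open>\<rho> = exp (- U - W)\<close>, the function \<open>\<rho> (L\<^sub>W F - \<nabla>U \<bullet> \<nabla>F)\<close> is the divergence of
  \<open>\<rho> \<nabla>F\<close>; integrating it against \<open>g\<^sup>2 / F\<close> by parts and completing the square bounds the
  left-hand side by the Dirichlet energy of \<open>g\<close>.\<close>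
lemma lyapunov_integration_by_parts:
  fixes W U F g :: "'a::euclidean_space \<Rightarrow> real" and G :: "'a \<Rightarrow> 'a"
  assumes W: "Ck 1 W" and U: "Ck 1 U" and F: "Ck 2 F" and F_pos: "\<And>x. F x > 0"
    and g_deriv: "\<And>x. (g has_derivative (\<lambda>v. G x \<bullet> v)) (at x)" and G_cont: "continuous_on UNIV G"
    and g_supp: "\<And>x. norm x \<ge> T \<Longrightarrow> g x = 0"
  shows "(\<integral>x. exp (- U x) * exp (- W x) * (g x ^ 2 * (- (LW W F x - grad U x \<bullet> grad F x) / F x)) \<partial>lborel)
     \<le> (\<integral>x. exp (- U x) * exp (- W x) * (norm (G x))\<^sup>2 \<partial>lborel)"
proof -
  have F_ne: "\<And>x. F x \<noteq> 0" using F_pos by (metis less_irrefl)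
  define \<rho> where "\<rho> x = exp (- U x) * exp (- W x)" for x
  note F1 = Ck2_D(1)[OF F] and Fi = Ck2_D(2)[OF F]
  note Ud = Ck1_D[OF U] and Wd = Ck1_D[OF W] and Fd = Ck1_D[OF F1]
  have g_cont: "continuous_on UNIV g"
    using g_deriv by (meson continuous_at_imp_continuous_on has_derivative_continuous)
  have \<rho>_deriv: "(\<rho> has_derivative (\<lambda>v. - \<rho> x * ((grad U x + grad W x) \<bullet> v))) (at x)" for x
    unfolding \<rho>_def[abs_def]
    by (rule derivative_eq_intros Ud(1) Wd(1) refl | simp)+
      (simp add: algebra_simps inner_add_left fun_eq_iff)
  have \<rho>_cont: "continuous_on UNIV \<rho>" unfolding \<rho>_def[abs_def] using Ud(2) Wd(2) by (intro continuous_intros)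
  define h where "h i x = g x ^ 2 * \<rho> x * pd F i x / F x" for i x
  define D where "D i x v = 2 * g x * (G x \<bullet> v) * \<rho> x * pd F i x / F x
      - g x ^ 2 * \<rho> x * ((grad U x + grad W x) \<bullet> v) * pd F i x / F x
      + g x ^ 2 * \<rho> x * (grad (pd F i) x \<bullet> v) / F x
      - g x ^ 2 * \<rho> x * pd F i x * (grad F x \<bullet> v) / (F x)^2" for i x v
  have h_deriv: "(h i has_derivative D i x) (at x)" if i: "i \<in> Basis" for i x
    unfolding h_def[abs_def]
    by (rule has_derivative_eq_rhs,
        (rule derivative_eq_intros g_deriv \<rho>_deriv Ck1_D(1)[OF Fi[OF i]] Fd(1) refl | simp add: F_ne)+)
      (simp add: D_def fun_eq_iff field_simps power2_eq_square add_divide_distrib diff_divide_distrib)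
  have D_cont: "continuous_on UNIV (\<lambda>x. D i x i)" if i: "i \<in> Basis" for i
    unfolding D_def using Ck1_D(2,4)[OF Fi[OF i]] Fd(2,4) Ud(4) Wd(4) g_cont G_cont \<rho>_cont
    by (intro continuous_intros) (auto simp: F_ne)
  note div = integral_divergence_eq_0[of h D, OF h_deriv D_cont, of T]
  define A where "A x = \<rho> x * (2 * g x * (G x \<bullet> grad F x) / F x - g x ^ 2 * (norm (grad F x))\<^sup>2 / (F x)^2)" for x
  have div_eq: "\<rho> x * (g x ^ 2 * (- (LW W F x - grad U x \<bullet> grad F x) / F x)) = A x - (\<Sum>i\<in>Basis. D i x i)" for x
  proof -
    have inner_grad: "(\<Sum>i\<in>Basis. (a \<bullet> i) * pd F i x) = a \<bullet> grad F x" for a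
      by (simp add: euclidean_inner[of a "grad F x"] grad_inner_Basis)
    have "(\<Sum>i\<in>Basis. D i x i) = 2 * g x * \<rho> x / F x * (\<Sum>i\<in>Basis. (G x \<bullet> i) * pd F i x)
       - g x ^ 2 * \<rho> x / F x * (\<Sum>i\<in>Basis. ((grad U x + grad W x) \<bullet> i) * pd F i x)
       + g x ^ 2 * \<rho> x / F x * (\<Sum>i\<in>Basis. grad (pd F i) x \<bullet> i)
       - g x ^ 2 * \<rho> x / (F x)^2 * (\<Sum>i\<in>Basis. (grad F x \<bullet> i) * pd F i x)"
      unfolding D_def sum_distrib_left sum_subtractf[symmetric] sum.distrib[symmetric]
      by (rule sum.cong) (auto simp: field_simps)
    also have "\<dots> = 2 * g x * \<rho> x / F x * (G x \<bullet> grad F x)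
       - g x ^ 2 * \<rho> x / F x * ((grad U x + grad W x) \<bullet> grad F x)
       + g x ^ 2 * \<rho> x / F x * lap F x
       - g x ^ 2 * \<rho> x / (F x)^2 * (norm (grad F x))\<^sup>2"
      by (simp only: inner_grad power2_norm_eq_inner) (simp add: lap_def grad_inner_Basis)
    finally show ?thesis
      by (simp add: A_def LW_def field_simps inner_add_left power2_eq_square)
        (simp add: add_divide_distrib diff_divide_distrib)
  qed
  have G_supp: "G x = 0" if "norm x > T" for x
    using grad_zero_outside_ball[OF g_deriv g_supp that] .
  have A_int: "integrable lborel A"
    by (rule integrable_continuous_zero_outside[of _ T])
      (use Fd(2,4) g_cont G_cont \<rho>_cont F_ne g_supp in \<open>auto simp: A_def intro!: continuous_intros\<close>)
  have energy_int: "integrable lborel (\<lambda>x. \<rho> x * (norm (G x))\<^sup>2)"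
    by (rule integrable_continuous_zero_outside[of _ T])
      (use \<rho>_cont G_cont G_supp in \<open>auto intro!: continuous_intros\<close>)
  have A_le: "A x \<le> \<rho> x * (norm (G x))\<^sup>2" for x
    unfolding A_def using inner_quotient_le_norm_sq[OF F_ne] by (simp add: \<rho>_def)
  have "(\<integral>x. \<rho> x * (g x ^ 2 * (- (LW W F x - grad U x \<bullet> grad F x) / F x)) \<partial>lborel)
      = (\<integral>x. A x \<partial>lborel) - (\<integral>x. (\<Sum>i\<in>Basis. D i x i) \<partial>lborel)"
    unfolding div_eq using A_int div(1) g_supp by (simp add: h_def)
  also have "\<dots> = (\<integral>x. A x \<partial>lborel)" using div(2) g_supp by (simp add: h_def)
  also have "\<dots> \<le> (\<integral>x. \<rho> x * (norm (G x))\<^sup>2 \<partial>lborel)"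
    by (rule integral_mono[OF A_int energy_int A_le])
  finally show ?thesis unfolding \<rho>_def .
qed

section \<open>A Poincare inequality on convex compact sets\<close>

lemma sq_integral_le_integral_sq_01:
  fixes \<gamma> :: "real \<Rightarrow> real"
  assumes "continuous_on {0..1} \<gamma>"
  shows "(\<integral>t. indicator {0..1} t * \<gamma> t \<partial>lborel)\<^sup>2 \<le> (\<integral>t. indicator {0..1} t * (\<gamma> t)\<^sup>2 \<partial>lborel)"
proof -
  define a where "a = (\<integral>t. indicator {0..1} t * \<gamma> t \<partial>lborel)"
  have int1: "integrable lborel (\<lambda>t. indicator {0..1} t * \<gamma> t)"
    using borel_integrable_atLeastAtMost'[OF assms] by (simp add: set_integrable_def)
  have int2: "integrable lborel (\<lambda>t. indicator {0..1} t * (\<gamma> t)\<^sup>2)"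
    using borel_integrable_atLeastAtMost'[of 0 1 "\<lambda>t. (\<gamma> t)\<^sup>2"] assms
    by (auto simp: set_integrable_def intro: continuous_intros)
  have int0: "integrable lborel (\<lambda>t. indicator {0..1::real} t :: real)"
    by (rule integrable_real_indicator) auto
  have "0 \<le> (\<integral>t. indicator {0..1} t * (\<gamma> t - a)\<^sup>2 \<partial>lborel)"
    by (intro integral_nonneg_AE) auto
  also have "\<dots> = (\<integral>t. indicator {0..1} t * (\<gamma> t)\<^sup>2 - 2 * a * (indicator {0..1} t * \<gamma> t)
      + a\<^sup>2 * indicator {0..1} t \<partial>lborel)"
    by (rule Bochner_Integration.integral_cong) (auto simp: power2_eq_square algebra_simps)
  also have "\<dots> = (\<integral>t. indicator {0..1} t * (\<gamma> t)\<^sup>2 \<partial>lborel) - a\<^sup>2"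
    using int0 int1 int2 by (simp add: a_def power2_eq_square)
  finally show ?thesis by (simp add: a_def)
qed

lemma sq_diff_le_segment_integral:
  fixes f :: "'a::euclidean_space \<Rightarrow> real" and G :: "'a \<Rightarrow> 'a"
  assumes f_deriv: "\<And>x. (f has_derivative (\<lambda>v. G x \<bullet> v)) (at x)" and G_cont: "continuous_on UNIV G"
  shows "(f y - f x)\<^sup>2 \<le> (norm (y - x))\<^sup>2 * (\<integral>t. indicator {0..1} t * (norm (G (x + t *\<^sub>R (y - x))))\<^sup>2 \<partial>lborel)"
proof -
  define \<gamma> where "\<gamma> t = G (x + t *\<^sub>R (y - x)) \<bullet> (y - x)" for t
  have G_line: "continuous_on UNIV (\<lambda>t::real. G (x + t *\<^sub>R (y - x)))"
    by (intro continuous_on_compose2[OF G_cont] continuous_intros) auto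
  then have \<gamma>_cont: "continuous_on UNIV \<gamma>" unfolding \<gamma>_def by (intro continuous_intros)
  have "(\<integral>t. indicator {0..1} t *\<^sub>R \<gamma> t \<partial>lborel) = f y - f x"
    using integral_FTC_atLeastAtMost[of 0 1 "\<lambda>t. f (x + t *\<^sub>R (y - x))" \<gamma>] \<gamma>_cont
      has_real_derivative_along_line[OF f_deriv]
    by (auto simp: \<gamma>_def has_real_derivative_iff_has_vector_derivative[symmetric]
        intro: has_field_derivative_at_within continuous_on_subset)
  then have "(f y - f x)\<^sup>2 \<le> (\<integral>t. indicator {0..1} t * (\<gamma> t)\<^sup>2 \<partial>lborel)"
    using sq_integral_le_integral_sq_01[OF continuous_on_subset[OF \<gamma>_cont]] by simp
  also have "\<dots> \<le> (\<integral>t. (norm (y - x))\<^sup>2 * (indicator {0..1} t * (norm (G (x + t *\<^sub>R (y - x))))\<^sup>2) \<partial>lborel)"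
  proof (rule integral_mono)
    show "integrable lborel (\<lambda>t. indicator {0..1} t * (\<gamma> t)\<^sup>2)"
      using borel_integrable_atLeastAtMost'[of 0 1 "\<lambda>t. (\<gamma> t)\<^sup>2"] \<gamma>_cont
      by (auto simp: set_integrable_def intro: continuous_on_subset continuous_intros)
    show "integrable lborel (\<lambda>t. (norm (y - x))\<^sup>2 * (indicator {0..1} t * (norm (G (x + t *\<^sub>R (y - x))))\<^sup>2))"
    proof -
      have "continuous_on UNIV (\<lambda>t. (norm (G (x + t *\<^sub>R (y - x))))\<^sup>2)"
        using G_line by (intro continuous_intros)
      from borel_integrable_atLeastAtMost'[OF continuous_on_subset[OF this]]
      show ?thesis by (simp add: set_integrable_def)
    qed
    fix t
    have "\<bar>\<gamma> t\<bar> \<le> norm (G (x + t *\<^sub>R (y - x))) * norm (y - x)"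
      unfolding \<gamma>_def by (rule Cauchy_Schwarz_ineq2)
    then have "(\<gamma> t)\<^sup>2 \<le> (norm (G (x + t *\<^sub>R (y - x))) * norm (y - x))\<^sup>2"
      by (metis abs_ge_zero abs_le_square_iff abs_mult abs_norm_cancel)
    then show "indicator {0..1} t * (\<gamma> t)\<^sup>2
        \<le> (norm (y - x))\<^sup>2 * (indicator {0..1} t * (norm (G (x + t *\<^sub>R (y - x))))\<^sup>2)"
      by (auto simp: indicator_def power_mult_distrib mult.commute)
  qed
  finally show ?thesis by simp
qed

lemma nn_integral_lborel_affine:
  fixes k :: "'a::euclidean_space \<Rightarrow> ennreal"
  assumes k[measurable]: "k \<in> borel_measurable borel" and c: "c \<noteq> 0"
  shows "(\<integral>\<^sup>+y. k (a + c *\<^sub>R y) \<partial>lborel) = ennreal (1 / \<bar>c\<bar> ^ DIM('a)) * (\<integral>\<^sup>+y. k y \<partial>lborel)"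
proof -
  have "(\<integral>\<^sup>+y. k y \<partial>lborel)
      = (\<integral>\<^sup>+y. k y \<partial>density (distr lborel borel (\<lambda>x. a + c *\<^sub>R x)) (\<lambda>_. \<bar>c\<bar>^DIM('a)))"
    using lborel_affine[OF c, of a] by simp
  also have "\<dots> = (\<integral>\<^sup>+y. ennreal (\<bar>c\<bar>^DIM('a)) * k (a + c *\<^sub>R y) \<partial>lborel)"
    by (subst nn_integral_density, simp, simp, subst nn_integral_distr) simp_all
  also have "\<dots> = ennreal (\<bar>c\<bar>^DIM('a)) * (\<integral>\<^sup>+y. k (a + c *\<^sub>R y) \<partial>lborel)"
    by (rule nn_integral_cmult) simp
  finally have eq: "(\<integral>\<^sup>+y. k y \<partial>lborel) = ennreal (\<bar>c\<bar>^DIM('a)) * (\<integral>\<^sup>+y. k (a + c *\<^sub>R y) \<partial>lborel)" .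
  have "ennreal (1 / \<bar>c\<bar> ^ DIM('a)) * ennreal (\<bar>c\<bar>^DIM('a)) = 1"
    using c by (simp add: ennreal_mult'[symmetric])
  then show ?thesis unfolding eq by (simp add: mult.assoc[symmetric])
qed

lemma nn_integral_dilation_le:
  fixes H :: "'a::euclidean_space \<Rightarrow> real"
  assumes H[measurable]: "H \<in> borel_measurable borel" and H_nonneg: "\<And>z. H z \<ge> 0"
    and s: "1/2 \<le> s" "s \<le> 1"
  shows "(\<integral>\<^sup>+y. ennreal (indicator B y * H (a + s *\<^sub>R y)) \<partial>lborel)
    \<le> ennreal (2^DIM('a)) * (\<integral>\<^sup>+z. ennreal (H z) \<partial>lborel)"
proof -
  have "(\<integral>\<^sup>+y. ennreal (indicator B y * H (a + s *\<^sub>R y)) \<partial>lborel)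
      \<le> (\<integral>\<^sup>+y. ennreal (H (a + s *\<^sub>R y)) \<partial>lborel)"
    using H_nonneg by (intro nn_integral_mono) (auto simp: indicator_def)
  also have "\<dots> = ennreal ((1 / s) ^ DIM('a)) * (\<integral>\<^sup>+z. ennreal (H z) \<partial>lborel)"
    using s nn_integral_lborel_affine[where k="\<lambda>z. ennreal (H z)" and c=s] by (simp add: power_one_over)
  also have "\<dots> \<le> ennreal (2^DIM('a)) * (\<integral>\<^sup>+z. ennreal (H z) \<partial>lborel)"
    using s by (intro mult_right_mono ennreal_leI power_mono) (auto simp: field_simps)
  finally show ?thesis .
qed

text \<open>For \<open>t \<ge> 1/2\<close> integrate first over \<open>y\<close>, otherwise first over \<open>x\<close>: the inner integral
  is then a dilation by a factor of at least \<open>1/2\<close>.\<close>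
lemma nn_integral_segment_point_le:
  fixes H :: "'a::euclidean_space \<Rightarrow> real"
  assumes H[measurable]: "H \<in> borel_measurable borel" and H_nonneg: "\<And>z. H z \<ge> 0"
    and B[measurable]: "B \<in> sets borel" and t: "0 \<le> t" "t \<le> 1"
  shows "(\<integral>\<^sup>+x. \<integral>\<^sup>+y. ennreal (indicator B x * indicator B y * H (x + t *\<^sub>R (y - x))) \<partial>lborel \<partial>lborel)
     \<le> emeasure lborel B * (ennreal (2^DIM('a)) * (\<integral>\<^sup>+z. ennreal (H z) \<partial>lborel))"
proof (cases "t \<ge> 1/2")
  case True
  have "(\<integral>\<^sup>+x. \<integral>\<^sup>+y. ennreal (indicator B x * indicator B y * H (x + t *\<^sub>R (y - x))) \<partial>lborel \<partial>lborel)
     \<le> (\<integral>\<^sup>+x. indicator B x * (ennreal (2^DIM('a)) * (\<integral>\<^sup>+z. ennreal (H z) \<partial>lborel)) \<partial>lborel)"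
  proof (rule nn_integral_mono)
    fix x
    have "(\<integral>\<^sup>+y. ennreal (indicator B y * H ((1 - t) *\<^sub>R x + t *\<^sub>R y)) \<partial>lborel)
      \<le> ennreal (2^DIM('a)) * (\<integral>\<^sup>+z. ennreal (H z) \<partial>lborel)"
      using True t by (intro nn_integral_dilation_le) (auto simp: H_nonneg)
    then show "(\<integral>\<^sup>+y. ennreal (indicator B x * indicator B y * H (x + t *\<^sub>R (y - x))) \<partial>lborel)
      \<le> indicator B x * (ennreal (2^DIM('a)) * (\<integral>\<^sup>+z. ennreal (H z) \<partial>lborel))"
      by (cases "x \<in> B") (simp_all add: algebra_simps)
  qed
  then show ?thesis by (simp add: nn_integral_multc)
next
  case False
  have "(\<integral>\<^sup>+x. \<integral>\<^sup>+y. ennreal (indicator B x * indicator B y * H (x + t *\<^sub>R (y - x))) \<partial>lborel \<partial>lborel)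
      = (\<integral>\<^sup>+y. \<integral>\<^sup>+x. ennreal (indicator B x * indicator B y * H (x + t *\<^sub>R (y - x))) \<partial>lborel \<partial>lborel)"
    by (rule lborel_pair.Fubini'[symmetric]) measurable
  also have "\<dots> \<le> (\<integral>\<^sup>+y. indicator B y * (ennreal (2^DIM('a)) * (\<integral>\<^sup>+z. ennreal (H z) \<partial>lborel)) \<partial>lborel)"
  proof (rule nn_integral_mono)
    fix y
    have "(\<integral>\<^sup>+x. ennreal (indicator B x * H (t *\<^sub>R y + (1 - t) *\<^sub>R x)) \<partial>lborel)
      \<le> ennreal (2^DIM('a)) * (\<integral>\<^sup>+z. ennreal (H z) \<partial>lborel)"
      using False t by (intro nn_integral_dilation_le) (auto simp: H_nonneg)
    then show "(\<integral>\<^sup>+x. ennreal (indicator B x * indicator B y * H (x + t *\<^sub>R (y - x))) \<partial>lborel)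
      \<le> indicator B y * (ennreal (2^DIM('a)) * (\<integral>\<^sup>+z. ennreal (H z) \<partial>lborel))"
      by (cases "y \<in> B") (simp_all add: algebra_simps)
  qed
  finally show ?thesis by (simp add: nn_integral_multc)
qed

lemma nn_integral_pair_sq_diff:
  fixes f :: "'a::euclidean_space \<Rightarrow> real"
  assumes B: "compact B" "0 < measure lborel B" and f_cont: "continuous_on UNIV f"
  defines "c \<equiv> (\<integral>y. indicator B y * f y \<partial>lborel) / measure lborel B"
  shows "(\<integral>\<^sup>+x. \<integral>\<^sup>+y. ennreal (indicator B x * indicator B y * (f x - f y)\<^sup>2) \<partial>lborel \<partial>lborel)
    = ennreal (2 * measure lborel B * (\<integral>x. indicator B x * (f x - c)\<^sup>2 \<partial>lborel))"
proof -
  define mB where "mB = measure lborel B"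
  have int_B: "integrable lborel (\<lambda>x. indicator B x * g x)" if "continuous_on UNIV g" for g :: "'a \<Rightarrow> real"
    using borel_integrable_compact[OF B(1), of g] that by (auto intro: continuous_on_subset)
  have i0: "integrable lborel (\<lambda>x. indicator B x :: real)" using int_B[of "\<lambda>_. 1"] by simp
  have i1: "integrable lborel (\<lambda>x. indicator B x * f x)" using int_B[OF f_cont] .
  have i2: "integrable lborel (\<lambda>x. indicator B x * (f x)\<^sup>2)" by (rule int_B, intro continuous_intros f_cont)
  define I1 where "I1 = (\<integral>y. indicator B y * f y \<partial>lborel)"
  define I2 where "I2 = (\<integral>y. indicator B y * (f y)\<^sup>2 \<partial>lborel)"
  have mB: "(\<integral>y. indicator B y \<partial>lborel) = mB"
    using B(1) by (simp add: mB_def compact_imp_closed borel_closed)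
  define k where "k x = indicator B x * (mB * (f x)\<^sup>2 - 2 * f x * I1 + I2)" for x
  have inner: "integrable lborel (\<lambda>y. indicator B x * indicator B y * (f x - f y)\<^sup>2)"
    "(\<integral>y. indicator B x * indicator B y * (f x - f y)\<^sup>2 \<partial>lborel) = k x" for x
  proof -
    have "integrable lborel (\<lambda>y. indicator B y * (indicator B x * (f x - f y)\<^sup>2))"
      by (rule int_B, intro continuous_intros f_cont)
    then show "integrable lborel (\<lambda>y. indicator B x * indicator B y * (f x - f y)\<^sup>2)"
      by (simp add: mult.assoc mult.left_commute)
    have "(\<lambda>y. indicator B x * indicator B y * (f x - f y)\<^sup>2) =
      (\<lambda>y. indicator B x * ((f x)\<^sup>2 * indicator B y - 2 * f x * (indicator B y * f y) + indicator B y * (f y)\<^sup>2))"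
      by (auto simp: fun_eq_iff power2_eq_square algebra_simps)
    then show "(\<integral>y. indicator B x * indicator B y * (f x - f y)\<^sup>2 \<partial>lborel) = k x"
      using i0 i1 i2 mB by (simp add: k_def I1_def I2_def)
  qed
  have k_nonneg: "k x \<ge> 0" for x
    unfolding inner(2)[symmetric] by (rule integral_nonneg_AE) auto
  have k_eq: "k = (\<lambda>x. mB * (indicator B x * (f x)\<^sup>2) - 2 * I1 * (indicator B x * f x) + I2 * indicator B x)"
    by (auto simp: fun_eq_iff k_def algebra_simps)
  have k_int: "integrable lborel k" unfolding k_eq using i0 i1 i2 by simp
  define V where "V = (\<integral>x. indicator B x * (f x - c)\<^sup>2 \<partial>lborel)"
  have "V = I2 - 2 * c * I1 + c\<^sup>2 * mB"
  proof -
    have "(\<lambda>x. indicator B x * (f x - c)\<^sup>2) = (\<lambda>x. indicator B x * (f x)\<^sup>2 - 2 * c * (indicator B x * f x) + c\<^sup>2 * indicator B x)"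
      by (auto simp: fun_eq_iff power2_eq_square algebra_simps)
    then show ?thesis using i0 i1 i2 mB by (simp add: V_def I1_def I2_def)
  qed
  moreover have "(\<integral>x. k x \<partial>lborel) = mB * I2 - 2 * I1 * I1 + I2 * mB"
    unfolding k_eq using i0 i1 i2 mB by (simp add: I1_def I2_def)
  moreover have "c = I1 / mB" and "mB > 0" using B(2) by (simp_all add: c_def I1_def mB_def)
  ultimately have "(\<integral>x. k x \<partial>lborel) = 2 * mB * V"
    by (simp add: field_simps power2_eq_square)
  then show ?thesis
    using nn_integral_eq_integral[OF k_int] nn_integral_eq_integral[OF inner(1)] inner(2) k_nonneg
    by (simp add: mB_def V_def)
qed

lemma nn_integral_segments_le:
  fixes H :: "'a::euclidean_space \<Rightarrow> real"
  assumes [measurable]: "H \<in> borel_measurable borel" "B \<in> sets borel" and H_nonneg: "\<And>z. H z \<ge> 0"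
  shows "(\<integral>\<^sup>+x. \<integral>\<^sup>+y. \<integral>\<^sup>+t. ennreal (indicator B x * indicator B y * (indicator {0..1} t * H (x + t *\<^sub>R (y - x))))
      \<partial>lborel \<partial>lborel \<partial>lborel) \<le> emeasure lborel B * (ennreal (2^DIM('a)) * (\<integral>\<^sup>+z. ennreal (H z) \<partial>lborel))"
    (is "(\<integral>\<^sup>+x. \<integral>\<^sup>+y. \<integral>\<^sup>+t. ?\<Phi> x y t \<partial>lborel \<partial>lborel \<partial>lborel) \<le> ?C")
proof -
  have "(\<integral>\<^sup>+y. \<integral>\<^sup>+t. ?\<Phi> x y t \<partial>lborel \<partial>lborel) = (\<integral>\<^sup>+t. \<integral>\<^sup>+y. ?\<Phi> x y t \<partial>lborel \<partial>lborel)" for x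
    by (rule lborel_pair.Fubini'[symmetric]) measurable
  then have "(\<integral>\<^sup>+x. \<integral>\<^sup>+y. \<integral>\<^sup>+t. ?\<Phi> x y t \<partial>lborel \<partial>lborel \<partial>lborel)
      = (\<integral>\<^sup>+x. \<integral>\<^sup>+t. \<integral>\<^sup>+y. ?\<Phi> x y t \<partial>lborel \<partial>lborel \<partial>lborel)"
    by simp
  also have "\<dots> = (\<integral>\<^sup>+t. \<integral>\<^sup>+x. \<integral>\<^sup>+y. ?\<Phi> x y t \<partial>lborel \<partial>lborel \<partial>lborel)"
    by (rule lborel_pair.Fubini'[symmetric]) measurable
  also have "\<dots> \<le> (\<integral>\<^sup>+t. indicator {0..1::real} t * ?C \<partial>lborel)"
  proof (rule nn_integral_mono)
    fix t :: real
    show "(\<integral>\<^sup>+x. \<integral>\<^sup>+y. ?\<Phi> x y t \<partial>lborel \<partial>lborel) \<le> indicator {0..1} t * ?C"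
      using nn_integral_segment_point_le[of H B t] H_nonneg by (cases "t \<in> {0..1}") auto
  qed
  also have "\<dots> = ?C" by (simp add: nn_integral_multc)
  finally show ?thesis .
qed

lemma sq_diff_le_segment_energy:
  fixes f :: "'a::euclidean_space \<Rightarrow> real" and G :: "'a \<Rightarrow> 'a"
  assumes f_deriv: "\<And>x. (f has_derivative (\<lambda>v. G x \<bullet> v)) (at x)" and G_cont: "continuous_on UNIV G"
    and B: "convex B" "bounded B"
  shows "ennreal (indicator B x * indicator B y * (f x - f y)\<^sup>2)
    \<le> ennreal ((diameter B)\<^sup>2) * (\<integral>\<^sup>+t. ennreal (indicator B x * indicator B y *
        (indicator {0..1} t * (indicator B (x + t *\<^sub>R (y - x)) * (norm (G (x + t *\<^sub>R (y - x))))\<^sup>2))) \<partial>lborel)"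
proof (cases "x \<in> B \<and> y \<in> B")
  case True
  let ?S = "\<lambda>t. indicator {0..1} t * (norm (G (x + t *\<^sub>R (y - x))))\<^sup>2"
  have seg: "x + t *\<^sub>R (y - x) \<in> B" if "t \<in> {0..1}" for t
    using convexD_alt[OF B(1), of x y t] True that by (auto simp: algebra_simps)
  have "integrable lborel ?S"
  proof -
    have "continuous_on UNIV (\<lambda>t. (norm (G (x + t *\<^sub>R (y - x))))\<^sup>2)"
      by (intro continuous_intros continuous_on_compose2[OF G_cont]) auto
    from borel_integrable_atLeastAtMost'[OF continuous_on_subset[OF this]]
    show ?thesis by (simp add: set_integrable_def)
  qed
  moreover have "(\<integral>\<^sup>+t. ennreal (indicator B x * indicator B y *
        (indicator {0..1} t * (indicator B (x + t *\<^sub>R (y - x)) * (norm (G (x + t *\<^sub>R (y - x))))\<^sup>2))) \<partial>lborel)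
      = (\<integral>\<^sup>+t. ennreal (?S t) \<partial>lborel)"
    using True seg by (intro nn_integral_cong) (auto simp: indicator_def)
  ultimately have segment_eq: "(\<integral>\<^sup>+t. ennreal (indicator B x * indicator B y *
        (indicator {0..1} t * (indicator B (x + t *\<^sub>R (y - x)) * (norm (G (x + t *\<^sub>R (y - x))))\<^sup>2))) \<partial>lborel)
      = ennreal (\<integral>t. ?S t \<partial>lborel)"
    by (simp add: nn_integral_eq_integral)
  have "norm (y - x) \<le> diameter B"
    using True B(2) by (simp add: diameter_bounded_bound dist_norm[symmetric] dist_commute)
  then have "(norm (y - x))\<^sup>2 \<le> (diameter B)\<^sup>2" by (simp add: power_mono)
  moreover have "0 \<le> (\<integral>t. ?S t \<partial>lborel)" by (rule integral_nonneg_AE) auto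
  ultimately have "(f y - f x)\<^sup>2 \<le> (diameter B)\<^sup>2 * (\<integral>t. ?S t \<partial>lborel)"
    using sq_diff_le_segment_integral[OF f_deriv G_cont, of y x] mult_right_mono order_trans
    by blast
  then have "(f x - f y)\<^sup>2 \<le> (diameter B)\<^sup>2 * (\<integral>t. ?S t \<partial>lborel)"
    by (simp only: power2_commute)
  then show ?thesis
    using True unfolding segment_eq by (simp add: ennreal_mult''[symmetric] ennreal_leI)
qed (auto simp: indicator_def)

text \<open>Each difference \<open>f x - f y\<close> is controlled by the energy along the segment from \<open>x\<close> to
  \<open>y\<close>; averaging over all pairs, the point \<open>x + t (y - x)\<close> is spread over \<open>B\<close> with density at
  most \<open>2^DIM('a) / measure lborel B\<close>.\<close>
lemma poincare_convex:
  fixes f :: "'a::euclidean_space \<Rightarrow> real" and G :: "'a \<Rightarrow> 'a"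
  assumes f_deriv: "\<And>x. (f has_derivative (\<lambda>v. G x \<bullet> v)) (at x)" and G_cont: "continuous_on UNIV G"
    and B: "convex B" "compact B" "0 < measure lborel B"
  defines "c \<equiv> (\<integral>y. indicator B y * f y \<partial>lborel) / measure lborel B"
  shows "(\<integral>x. indicator B x * (f x - c)\<^sup>2 \<partial>lborel)
    \<le> (diameter B)\<^sup>2 * 2 ^ DIM('a) / 2 * (\<integral>x. indicator B x * (norm (G x))\<^sup>2 \<partial>lborel)"
proof -
  define mB where "mB = measure lborel B"
  define d where "d = diameter B"
  define H where "H z = indicator B z * (norm (G z))\<^sup>2" for z
  define IG where "IG = (\<integral>z. H z \<partial>lborel)"
  have [measurable]: "B \<in> sets borel" using B(2) by (simp add: compact_imp_closed borel_closed)
  have [measurable]: "G \<in> borel_measurable borel" using G_cont by (rule borel_measurable_continuous_onI)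
  have [measurable]: "H \<in> borel_measurable borel" unfolding H_def[abs_def] by measurable
  have H_nonneg: "H z \<ge> 0" for z by (simp add: H_def)
  have "continuous_on B (\<lambda>x. (norm (G x))\<^sup>2)"
    using continuous_on_subset[OF G_cont] by (intro continuous_intros) auto
  from borel_integrable_compact[OF B(2) this] have "integrable lborel H"
    by (simp add: H_def[abs_def])
  then have H_nn_integral: "(\<integral>\<^sup>+z. ennreal (H z) \<partial>lborel) = ennreal IG"
    using H_nonneg by (simp add: nn_integral_eq_integral IG_def)
  have IG_nonneg: "IG \<ge> 0" unfolding IG_def using H_nonneg by (simp add: integral_nonneg_AE)
  have emB: "emeasure lborel B = ennreal mB"
    unfolding mB_def using emeasure_compact_finite[OF B(2)]
    by (intro emeasure_eq_ennreal_measure) (simp add: less_top)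
  have f_cont: "continuous_on UNIV f"
    using f_deriv by (meson continuous_at_imp_continuous_on has_derivative_continuous)
  have "ennreal (2 * mB * (\<integral>x. indicator B x * (f x - c)\<^sup>2 \<partial>lborel))
      \<le> (\<integral>\<^sup>+x. \<integral>\<^sup>+y. ennreal (d\<^sup>2) * (\<integral>\<^sup>+t. ennreal (indicator B x * indicator B y *
          (indicator {0..1} t * H (x + t *\<^sub>R (y - x)))) \<partial>lborel) \<partial>lborel \<partial>lborel)"
    unfolding mB_def c_def nn_integral_pair_sq_diff[OF B(2,3) f_cont, symmetric] d_def H_def
    using sq_diff_le_segment_energy[OF f_deriv G_cont B(1) compact_imp_bounded[OF B(2)]]
    by (intro nn_integral_mono) auto
  also have "\<dots> = ennreal (d\<^sup>2) * (\<integral>\<^sup>+x. \<integral>\<^sup>+y. \<integral>\<^sup>+t. ennreal (indicator B x * indicator B y *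
          (indicator {0..1} t * H (x + t *\<^sub>R (y - x)))) \<partial>lborel \<partial>lborel \<partial>lborel)"
    by (simp add: nn_integral_cmult)
  also have "\<dots> \<le> ennreal (d\<^sup>2) * (ennreal mB * (ennreal (2^DIM('a)) * ennreal IG))"
    using nn_integral_segments_le[of H B] H_nonneg
    by (intro mult_left_mono) (simp_all add: emB H_nn_integral)
  also have "\<dots> = ennreal (d\<^sup>2 * mB * 2^DIM('a) * IG)"
    using IG_nonneg by (simp add: ennreal_mult mult.assoc mB_def)
  finally have "2 * mB * (\<integral>x. indicator B x * (f x - c)\<^sup>2 \<partial>lborel) \<le> d\<^sup>2 * mB * 2^DIM('a) * IG"
    using B(3) IG_nonneg by (subst (asm) ennreal_le_iff) (auto simp: mB_def)
  then show ?thesis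
    using B(3) by (simp add: d_def IG_def H_def mB_def field_simps)
qed

lemma integral_indicator_le_weighted:
  fixes \<rho> h :: "'a::euclidean_space \<Rightarrow> real"
  assumes \<rho>_lower: "\<And>x. x \<in> B \<Longrightarrow> m \<le> \<rho> x" and m: "0 < m" and \<rho>_nonneg: "\<And>x. 0 \<le> \<rho> x"
    and h_nonneg: "\<And>x. 0 \<le> h x"
    and int: "integrable lborel (\<lambda>x. indicator B x * h x)" "integrable lborel (\<lambda>x. \<rho> x * h x)"
  shows "(\<integral>x. indicator B x * h x \<partial>lborel) \<le> (\<integral>x. \<rho> x * h x \<partial>lborel) / m"
proof -
  have "(\<integral>x. indicator B x * h x \<partial>lborel) \<le> (\<integral>x. \<rho> x * h x / m \<partial>lborel)"
  proof (rule integral_mono[OF int(1)])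
    show "integrable lborel (\<lambda>x. \<rho> x * h x / m)" using int(2) by simp
    show "indicator B x * h x \<le> \<rho> x * h x / m" for x
      using \<rho>_lower[of x] \<rho>_nonneg[of x] h_nonneg[of x] m
      by (cases "x \<in> B") (auto simp: field_simps intro: mult_right_mono)
  qed
  then show ?thesis by simp
qed

lemma weighted_poincare_convex:
  fixes \<rho> :: "'a::euclidean_space \<Rightarrow> real"
  assumes \<rho>_cont: "continuous_on UNIV \<rho>" and \<rho>_pos: "\<And>x. \<rho> x > 0"
    and B: "convex B" "compact B" "0 < measure lborel B"
  obtains P where "P \<ge> 0" and "\<And>f G. (\<And>x. (f has_derivative (\<lambda>v. G x \<bullet> v)) (at x)) \<Longrightarrow>
      continuous_on UNIV G \<Longrightarrow> integrable lborel (\<lambda>x. \<rho> x * (norm (G x))\<^sup>2) \<Longrightarrow>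
      (\<integral>x. \<rho> x * (indicator B x * (f x - (\<integral>y. indicator B y * f y \<partial>lborel) / measure lborel B)\<^sup>2) \<partial>lborel)
        \<le> P * (\<integral>x. \<rho> x * (norm (G x))\<^sup>2 \<partial>lborel)"
proof -
  have "B \<noteq> {}" using B(3) by auto
  then obtain x_max x_min where x_max: "x_max \<in> B" "\<And>y. y \<in> B \<Longrightarrow> \<rho> y \<le> \<rho> x_max"
    and x_min: "x_min \<in> B" "\<And>y. y \<in> B \<Longrightarrow> \<rho> x_min \<le> \<rho> y"
    using continuous_attains_sup[OF B(2) _ continuous_on_subset[OF \<rho>_cont]]
      continuous_attains_inf[OF B(2) _ continuous_on_subset[OF \<rho>_cont]] by blast
  define P0 where "P0 = (diameter B)\<^sup>2 * 2 ^ DIM('a) / 2"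
  define P where "P = \<rho> x_max * P0 / \<rho> x_min"
  have P0: "P0 \<ge> 0" unfolding P0_def by simp
  have "P \<ge> 0" unfolding P_def using \<rho>_pos[of x_max] \<rho>_pos[of x_min] P0 by simp
  moreover have "(\<integral>x. \<rho> x * (indicator B x * (f x - (\<integral>y. indicator B y * f y \<partial>lborel) / measure lborel B)\<^sup>2) \<partial>lborel)
        \<le> P * (\<integral>x. \<rho> x * (norm (G x))\<^sup>2 \<partial>lborel)"
    if f_deriv: "\<And>x. (f has_derivative (\<lambda>v. G x \<bullet> v)) (at x)" and G_cont: "continuous_on UNIV G"
      and energy_int: "integrable lborel (\<lambda>x. \<rho> x * (norm (G x))\<^sup>2)" for f G
  proof -
    define c where "c = (\<integral>y. indicator B y * f y \<partial>lborel) / measure lborel B"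
    have f_cont: "continuous_on UNIV f"
      using f_deriv by (meson continuous_at_imp_continuous_on has_derivative_continuous)
    have int_B: "integrable lborel (\<lambda>x. indicator B x * g x)" if "continuous_on UNIV g" for g :: "'a \<Rightarrow> real"
      using borel_integrable_compact[OF B(2), of g] that by (auto intro: continuous_on_subset)
    have energy_B: "(\<integral>x. indicator B x * (norm (G x))\<^sup>2 \<partial>lborel)
        \<le> (\<integral>x. \<rho> x * (norm (G x))\<^sup>2 \<partial>lborel) / \<rho> x_min"
      using x_min(2) \<rho>_pos[of x_min] less_imp_le[OF \<rho>_pos] energy_int
        int_B[of "\<lambda>x. (norm (G x))\<^sup>2", OF continuous_on_power[OF continuous_on_norm[OF G_cont]]]
      by (intro integral_indicator_le_weighted) auto
    have "(\<integral>x. \<rho> x * (indicator B x * (f x - c)\<^sup>2) \<partial>lborel)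
        \<le> (\<integral>x. \<rho> x_max * (indicator B x * (f x - c)\<^sup>2) \<partial>lborel)"
    proof (rule integral_mono)
      show "integrable lborel (\<lambda>x. \<rho> x * (indicator B x * (f x - c)\<^sup>2))"
        using int_B[of "\<lambda>x. \<rho> x * (f x - c)\<^sup>2"] \<rho>_cont f_cont
        by (simp add: continuous_intros algebra_simps)
      show "integrable lborel (\<lambda>x. \<rho> x_max * (indicator B x * (f x - c)\<^sup>2))"
        by (intro integrable_mult_right int_B continuous_intros f_cont)
    qed (auto simp: indicator_def x_max intro: mult_right_mono)
    also have "\<dots> = \<rho> x_max * (\<integral>x. indicator B x * (f x - c)\<^sup>2 \<partial>lborel)" by simp
    also have "\<dots> \<le> \<rho> x_max * (P0 * (\<integral>x. indicator B x * (norm (G x))\<^sup>2 \<partial>lborel))"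
      using poincare_convex[OF f_deriv G_cont B] \<rho>_pos[of x_max]
      unfolding P0_def c_def by (intro mult_left_mono) auto
    also have "\<dots> \<le> \<rho> x_max * (P0 * ((\<integral>x. \<rho> x * (norm (G x))\<^sup>2 \<partial>lborel) / \<rho> x_min))"
      using energy_B P0 \<rho>_pos[of x_max] by (intro mult_left_mono) auto
    also have "\<dots> = P * (\<integral>x. \<rho> x * (norm (G x))\<^sup>2 \<partial>lborel)"
      by (simp add: P_def)
    finally show ?thesis unfolding c_def .
  qed
  ultimately show ?thesis using that by blast
qed

section \<open>Cutoff functions\<close>

definition hinge_sq :: "real \<Rightarrow> real" where
  "hinge_sq u = (max 0 (1 - u))\<^sup>2"

lemma hinge_sq_has_real_derivative: "(hinge_sq has_real_derivative (- 2 * max 0 (1 - u))) (at u)"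
proof -
  consider "u < 1" | "u > 1" | "u = 1" by linarith
  then show ?thesis
  proof cases
    case 1
    have ev: "eventually (\<lambda>y. hinge_sq y = (1 - y)\<^sup>2) (nhds u)"
      using eventually_nhds_in_open[of "{..<1}" u] 1 by (auto elim!: eventually_mono simp: hinge_sq_def)
    have "((\<lambda>y. (1 - y)\<^sup>2) has_real_derivative (- 2 * max 0 (1 - u))) (at u)"
      using 1 by (auto intro!: derivative_eq_intros)
    then show ?thesis using DERIV_cong_ev[OF refl ev refl] by simp
  next
    case 2
    have ev: "eventually (\<lambda>y. hinge_sq y = 0) (nhds u)"
      using eventually_nhds_in_open[of "{1<..}" u] 2 by (auto elim!: eventually_mono simp: hinge_sq_def)
    have "((\<lambda>y. 0) has_real_derivative (- 2 * max 0 (1 - u))) (at u)"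
      using 2 by (auto intro!: derivative_eq_intros)
    then show ?thesis using DERIV_cong_ev[OF refl ev refl] by simp
  next
    case 3
    have quotient: "(hinge_sq y - hinge_sq 1) / (y - 1) = - max 0 (1 - y)" if "y \<noteq> 1" for y
      using that by (cases "y < 1") (simp_all add: hinge_sq_def power2_eq_square field_simps)
    have "((\<lambda>y. - max 0 (1 - y)) \<longlongrightarrow> - max 0 (1 - 1::real)) (at 1)"
      by (intro tendsto_intros)
    then have "((\<lambda>y. - max 0 (1 - y)) \<longlongrightarrow> (0::real)) (at 1)" by simp
    then have "((\<lambda>y. (hinge_sq y - hinge_sq 1) / (y - 1)) \<longlongrightarrow> 0) (at 1)"
      by (rule Lim_transform_within[OF _ zero_less_one]) (auto simp: quotient)
    then show ?thesis using 3 by (simp add: has_field_derivative_iff)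
  qed
qed

definition cutoff :: "real \<Rightarrow> 'a::euclidean_space \<Rightarrow> real" where
  "cutoff N x = hinge_sq (inverse (N\<^sup>2) * (x \<bullet> x))"

definition cutoff_grad :: "real \<Rightarrow> 'a::euclidean_space \<Rightarrow> 'a" where
  "cutoff_grad N x = (- 4 * max 0 (1 - inverse (N\<^sup>2) * (x \<bullet> x)) * inverse (N\<^sup>2)) *\<^sub>R x"

lemma cutoff_has_derivative: "(cutoff N has_derivative (\<lambda>v. cutoff_grad N x \<bullet> v)) (at x)"
proof -
  have "((\<lambda>x. inverse (N\<^sup>2) * (x \<bullet> x)) has_derivative (\<lambda>v. inverse (N\<^sup>2) * (x \<bullet> v + v \<bullet> x))) (at x)"
    by (auto intro!: derivative_eq_intros)
  from DERIV_compose_FDERIV[OF hinge_sq_has_real_derivative this]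
  show ?thesis
    by (simp add: cutoff_def[abs_def] cutoff_grad_def inner_commute algebra_simps)
qed

lemma continuous_on_cutoff_grad: "continuous_on UNIV (cutoff_grad N)"
  unfolding cutoff_grad_def[abs_def] by (intro continuous_intros)

lemma continuous_on_cutoff: "continuous_on UNIV (cutoff N)"
  using cutoff_has_derivative by (meson continuous_at_imp_continuous_on has_derivative_continuous)

lemma cutoff_nonneg: "0 \<le> cutoff N x" and cutoff_le_1: "cutoff N x \<le> 1"
  by (auto simp: cutoff_def hinge_sq_def max_def power_le_one)

lemma cutoff_eq_0:
  assumes "N > 0" and "norm x \<ge> N"
  shows "cutoff N x = 0"
proof -
  have "N\<^sup>2 \<le> (norm x)\<^sup>2" using assms by (intro power_mono) auto
  then have "1 \<le> inverse (N\<^sup>2) * (x \<bullet> x)" using assms by (simp add: power2_norm_eq_inner field_simps)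
  then show ?thesis by (simp add: cutoff_def hinge_sq_def)
qed

lemma norm_cutoff_grad_le:
  assumes "N > 0"
  shows "norm (cutoff_grad N x) \<le> 4 / N"
proof (cases "norm x < N")
  case True
  define m where "m = max 0 (1 - inverse (N\<^sup>2) * (x \<bullet> x))"
  have m: "0 \<le> m" "m \<le> 1" unfolding m_def by auto
  have "norm (cutoff_grad N x) = 4 * m * inverse (N\<^sup>2) * norm x"
    unfolding cutoff_grad_def m_def[symmetric] using m by (simp add: abs_mult)
  also have "\<dots> \<le> 4 * inverse (N\<^sup>2) * N"
    using m True assms by (intro mult_mono) auto
  also have "\<dots> = 4 / N" using assms by (simp add: power2_eq_square field_simps)
  finally show ?thesis .
next
  case False
  then have "N\<^sup>2 \<le> (norm x)\<^sup>2" using assms by (intro power_mono) auto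
  then have "1 \<le> inverse (N\<^sup>2) * (x \<bullet> x)" using assms by (simp add: power2_norm_eq_inner field_simps)
  then show ?thesis using assms by (simp add: cutoff_grad_def)
qed

lemma cutoff_tendsto_1: "(\<lambda>n. cutoff (real n + 1) x) \<longlonglongrightarrow> 1"
proof -
  have "(\<lambda>n. (inverse (real (Suc n)))\<^sup>2 * (x \<bullet> x)) \<longlonglongrightarrow> 0\<^sup>2 * (x \<bullet> x)"
    by (intro tendsto_intros LIMSEQ_inverse_real_of_nat)
  then have "(\<lambda>n. inverse ((real n + 1)\<^sup>2) * (x \<bullet> x)) \<longlonglongrightarrow> 0"
    by (simp add: power_inverse add.commute)
  moreover have "isCont hinge_sq 0"
    using hinge_sq_has_real_derivative by (rule DERIV_isCont)
  ultimately have "(\<lambda>n. hinge_sq (inverse ((real n + 1)\<^sup>2) * (x \<bullet> x))) \<longlonglongrightarrow> hinge_sq 0"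
    by (rule isCont_tendsto_compose[rotated])
  then show ?thesis by (simp add: cutoff_def hinge_sq_def)
qed

section \<open>Variance, oscillation and the generalised inverse\<close>

lemma Var_le_integral_sq_diff:
  fixes f :: "'a \<Rightarrow> real"
  assumes "prob_space M" and f[measurable]: "f \<in> borel_measurable M" and f_bounded: "\<And>x. \<bar>f x\<bar> \<le> B"
  shows "Var M f \<le> (\<integral>x. (f x - c)\<^sup>2 \<partial>M)"
proof -
  interpret prob_space M by fact
  have int1: "integrable M f"
    using f_bounded by (intro integrable_const_bound[where B=B]) auto
  have int2: "integrable M (\<lambda>x. (f x)\<^sup>2)"
    using f_bounded by (intro integrable_const_bound[where B="B\<^sup>2"])
      (auto simp: abs_le_square_iff[symmetric] intro: order_trans[OF _ abs_ge_self])
  define a where "a = (\<integral>y. f y \<partial>M)"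
  have sq_diff: "(\<integral>x. (f x - d)\<^sup>2 \<partial>M) = (\<integral>x. (f x)\<^sup>2 \<partial>M) - 2 * d * a + d\<^sup>2" for d
  proof -
    have "(\<integral>x. (f x - d)\<^sup>2 \<partial>M) = (\<integral>x. (f x)\<^sup>2 - 2 * d * f x + d\<^sup>2 \<partial>M)"
      by (simp add: power2_eq_square algebra_simps)
    also have "\<dots> = (\<integral>x. (f x)\<^sup>2 \<partial>M) - 2 * d * a + d\<^sup>2"
      using int1 int2 by (simp add: a_def prob_space)
    finally show ?thesis .
  qed
  have "Var M f = (\<integral>x. (f x)\<^sup>2 \<partial>M) - 2 * a * a + a\<^sup>2" by (simp add: Var_def a_def sq_diff)
  also have "\<dots> \<le> (\<integral>x. (f x - c)\<^sup>2 \<partial>M)"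
    unfolding sq_diff using zero_le_power2[of "a - c"] by (simp add: power2_eq_square algebra_simps)
  finally show ?thesis .
qed

lemma abs_diff_le_Osc:
  fixes f :: "'a \<Rightarrow> real"
  assumes "bounded (range f)" and "Inf (range f) \<le> c" and "c \<le> Sup (range f)"
  shows "\<bar>f x - c\<bar> \<le> Osc f"
proof -
  have "Inf (range f) \<le> f x" "f x \<le> Sup (range f)"
    using assms(1) by (auto intro: cInf_lower cSup_upper bounded_imp_bdd_above bounded_imp_bdd_below)
  with assms(2,3) show ?thesis by (auto simp: Osc_def)
qed

lemma Var_le_Osc_sq:
  fixes f :: "'a \<Rightarrow> real"
  assumes M: "prob_space M" and f: "f \<in> borel_measurable M" and f_bounded: "bounded (range f)"
  shows "Var M f \<le> (Osc f)\<^sup>2"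
proof -
  interpret prob_space M by fact
  have inf_le_sup: "Inf (range f) \<le> Sup (range f)"
    using f_bounded by (intro cInf_le_cSup) (auto intro: bounded_imp_bdd_above bounded_imp_bdd_below)
  then have sq_le: "(f x - Inf (range f))\<^sup>2 \<le> (Osc f)\<^sup>2" for x
    using power_mono[OF abs_diff_le_Osc[OF f_bounded order_refl inf_le_sup, of x] abs_ge_zero, of 2]
    by simp
  obtain B where "\<And>x. \<bar>f x\<bar> \<le> B" using f_bounded unfolding bounded_iff by auto
  then have "Var M f \<le> (\<integral>x. (f x - Inf (range f))\<^sup>2 \<partial>M)"
    by (rule Var_le_integral_sq_diff[OF M f])
  also have "\<dots> \<le> (\<integral>x. (Osc f)\<^sup>2 \<partial>M)"
    using sq_le f by (intro integral_mono integrable_const_bound[where B="(Osc f)\<^sup>2"]) auto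
  finally show ?thesis by (simp add: prob_space)
qed

lemma average_between_Inf_Sup:
  fixes f :: "'a::euclidean_space \<Rightarrow> real"
  assumes f_bounded: "bounded (range f)" and f_cont: "continuous_on UNIV f"
    and B: "compact B" "0 < measure lborel B"
  defines "c \<equiv> (\<integral>y. indicator B y * f y \<partial>lborel) / measure lborel B"
  shows "Inf (range f) \<le> c" and "c \<le> Sup (range f)"
proof -
  have int: "integrable lborel (\<lambda>y. indicator B y * g y)" if "continuous_on UNIV g" for g :: "'a \<Rightarrow> real"
    using borel_integrable_compact[OF B(1), of g] that by (auto intro: continuous_on_subset)
  have bounds: "Inf (range f) \<le> f x" "f x \<le> Sup (range f)" for x
    using f_bounded by (auto intro: cInf_lower cSup_upper bounded_imp_bdd_above bounded_imp_bdd_below)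
  have "(\<integral>y. indicator B y * Inf (range f) \<partial>lborel) \<le> (\<integral>y. indicator B y * f y \<partial>lborel)"
    using bounds by (intro integral_mono int f_cont continuous_on_const) (auto simp: indicator_def)
  then show "Inf (range f) \<le> c"
    using B(2) by (simp add: c_def field_simps mult.commute)
  have "(\<integral>y. indicator B y * f y \<partial>lborel) \<le> (\<integral>y. indicator B y * Sup (range f) \<partial>lborel)"
    using bounds by (intro integral_mono int f_cont continuous_on_const) (auto simp: indicator_def)
  then show "c \<le> Sup (range f)"
    using B(2) by (simp add: c_def field_simps mult.commute)
qed

lemma emeasure_density_mult_le_SUP:
  fixes u w :: "'a \<Rightarrow> ennreal"
  assumes [measurable]: "u \<in> borel_measurable M" "w \<in> borel_measurable M" "A \<in> sets M"
  shows "emeasure (density M (\<lambda>x. u x * w x)) A \<le> (SUP x\<in>A. u x) * emeasure (density M w) A"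
proof -
  have "emeasure (density M (\<lambda>x. u x * w x)) A = (\<integral>\<^sup>+x. u x * w x * indicator A x \<partial>M)"
    by (simp add: emeasure_density)
  also have "\<dots> \<le> (\<integral>\<^sup>+x. (SUP y\<in>A. u y) * (w x * indicator A x) \<partial>M)"
    by (intro nn_integral_mono) (auto simp: indicator_def intro: mult_right_mono SUP_upper)
  also have "\<dots> = (SUP y\<in>A. u y) * emeasure (density M w) A"
    by (simp add: nn_integral_cmult emeasure_density)
  finally show ?thesis .
qed

lemma continuous_nonneg_nn_integral_eq_0:
  fixes g :: "'a::euclidean_space \<Rightarrow> real"
  assumes g_cont: "continuous_on UNIV g" and g_nonneg: "\<And>x. g x \<ge> 0"
    and zero: "(\<integral>\<^sup>+x. ennreal (g x) \<partial>lborel) = 0"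
  shows "g x = 0"
proof (rule ccontr)
  assume "g x \<noteq> 0"
  then have gx: "g x > 0" using g_nonneg[of x] by simp
  obtain d where d: "d > 0" "\<And>y. dist y x < d \<Longrightarrow> dist (g y) (g x) < g x / 2"
    using g_cont gx unfolding continuous_on_iff by (metis UNIV_I half_gt_zero)
  have low: "ennreal (g x / 2) * indicator (ball x d) y \<le> ennreal (g y)" for y
  proof (cases "y \<in> ball x d")
    case True
    then have "\<bar>g y - g x\<bar> < g x / 2" using d(2)[of y] by (simp add: dist_real_def dist_commute)
    then have "g x / 2 \<le> g y" by linarith
    then show ?thesis using True by (simp add: ennreal_leI)
  qed simp
  have "ennreal (g x / 2) * emeasure lborel (ball x d) = (\<integral>\<^sup>+y. ennreal (g x / 2) * indicator (ball x d) y \<partial>lborel)"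
    by (simp add: nn_integral_cmult_indicator)
  also have "\<dots> \<le> (\<integral>\<^sup>+y. ennreal (g y) \<partial>lborel)" by (intro nn_integral_mono low)
  also have "\<dots> = 0" by (rule zero)
  finally show False
    using gx d(1) unit_ball_vol_pos[of "real DIM('a)"] by (simp add: emeasure_ball ennreal_mult'[symmetric])
qed

lemma Var_density_eq_0_if_energy_eq_0:
  fixes \<rho> f :: "'a::euclidean_space \<Rightarrow> real"
  assumes M: "prob_space (density lborel (\<lambda>x. ennreal (\<rho> x)))"
    and \<rho>_cont: "continuous_on UNIV \<rho>" and \<rho>_pos: "\<And>x. \<rho> x > 0" and f: "Ck 1 f"
    and energy: "(\<integral>\<^sup>+x. ennreal ((norm (grad f x))\<^sup>2) \<partial>density lborel (\<lambda>x. ennreal (\<rho> x))) = 0"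
  shows "Var (density lborel (\<lambda>x. ennreal (\<rho> x))) f = 0"
proof -
  note fD = Ck1_D[OF f]
  have [measurable]: "\<rho> \<in> borel_measurable borel" "grad f \<in> borel_measurable borel"
    using \<rho>_cont fD(4) by (auto intro: borel_measurable_continuous_onI)
  have "(\<integral>\<^sup>+x. ennreal (\<rho> x * (norm (grad f x))\<^sup>2) \<partial>lborel)
      = (\<integral>\<^sup>+x. ennreal (\<rho> x) * ennreal ((norm (grad f x))\<^sup>2) \<partial>lborel)"
    using \<rho>_pos by (intro nn_integral_cong) (simp add: ennreal_mult less_imp_le)
  also have "\<dots> = 0" using energy by (simp add: nn_integral_density)
  finally have zero: "(\<integral>\<^sup>+x. ennreal (\<rho> x * (norm (grad f x))\<^sup>2) \<partial>lborel) = 0" .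
  have "continuous_on UNIV (\<lambda>x. \<rho> x * (norm (grad f x))\<^sup>2)"
    using \<rho>_cont fD(4) by (intro continuous_intros)
  then have energy_0: "\<rho> x * (norm (grad f x))\<^sup>2 = 0" for x
    by (rule continuous_nonneg_nn_integral_eq_0[OF _ _ zero]) (simp add: less_imp_le[OF \<rho>_pos])
  have "grad f x = 0" for x using energy_0[of x] \<rho>_pos[of x] by simp
  then have "(f has_derivative (\<lambda>_. 0)) (at x within UNIV)" for x using fD(1)[of x] by simp
  then obtain k where "\<And>x. f x = k" using has_derivative_zero_constant[of UNIV f] by auto
  then show ?thesis using prob_space.prob_space[OF M] by (simp add: Var_def)
qed

lemma antimono_gen_inv: "s \<le> t \<Longrightarrow> gen_inv h t \<le> gen_inv h s"
  unfolding gen_inv_def by (intro INF_superset_mono) (auto intro: order_trans ennreal_leI)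

text \<open>Since \<open>\<mu> {\<phi> \<le> 1 / r} \<rightarrow> 1\<close> as \<open>r \<rightarrow> 0\<close>, the condition \<open>h r \<le> s < 1\<close> forces \<open>r\<close> away from 0.\<close>
lemma gen_inv_pos:
  assumes M: "prob_space M" and [measurable]: "\<phi> \<in> borel_measurable M"
    and h: "\<And>r. 0 < r \<Longrightarrow> emeasure M {x\<in>space M. \<phi> x \<le> 1 / r} \<le> h r" and s: "s < 1"
  shows "0 < gen_inv h s"
proof -
  interpret prob_space M by fact
  define A where "A n = {x\<in>space M. \<phi> x \<le> real n}" for n
  have "(\<lambda>n. emeasure M (A n)) \<longlonglongrightarrow> emeasure M (\<Union>n. A n)"
    by (rule Lim_emeasure_incseq) (auto simp: A_def incseq_def intro: order_trans)
  moreover have "(\<Union>n. A n) = space M"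
    by (auto simp: A_def intro: real_nat_ceiling_ge)
  ultimately have "(\<lambda>n. emeasure M (A n)) \<longlonglongrightarrow> 1" by (simp add: emeasure_space_1)
  moreover have "ennreal s < 1" using s by (simp add: ennreal_lessI)
  ultimately obtain n where n: "ennreal s < emeasure M (A n)"
    by (metis (full_types) dual_order.refl eventually_sequentially order_tendstoD(1))
  have "1 / (real n + 1) \<le> r" if r: "0 < r" "h r \<le> ennreal s" for r
  proof (rule ccontr)
    assume "\<not> 1 / (real n + 1) \<le> r"
    then have "real n \<le> 1 / r" using r by (simp add: field_simps)
    then have "emeasure M (A n) \<le> emeasure M {x\<in>space M. \<phi> x \<le> 1 / r}"
      by (intro emeasure_mono) (auto simp: A_def)
    also have "\<dots> \<le> ennreal s" using h[OF r(1)] r(2) by (rule order_trans)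
    finally show False using n by simp
  qed
  then have "ennreal (1 / (real n + 1)) \<le> gen_inv h s"
    unfolding gen_inv_def by (auto intro!: INF_greatest ennreal_leI)
  then show ?thesis by (rule order.strict_trans2[rotated]) simp
qed

text \<open>The case \<open>a = \<top>\<close> is where \<open>0 < gen_inv h s\<close> is needed, since \<open>0 * \<top> = 0\<close> in
  \<open>ennreal\<close>.\<close>
lemma le_gen_inv_mult_add:
  assumes le: "\<And>r. 0 < r \<Longrightarrow> h r \<le> ennreal s \<Longrightarrow> x \<le> ennreal r * a + c"
    and pos: "0 < gen_inv h s" and a: "a \<noteq> 0"
  shows "x \<le> gen_inv h s * a + c"
proof -
  define S where "S = {r. 0 < r \<and> h r \<le> ennreal s}"
  have gi: "gen_inv h s = Inf (ennreal ` S)" by (simp add: gen_inv_def S_def)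
  show ?thesis
  proof (cases "a = \<top> \<or> S = {}")
    case True
    then have "gen_inv h s * a = \<top>" using pos a by (auto simp: gi ennreal_mult_eq_top_iff)
    then show ?thesis by simp
  next
    case False
    let ?g = "\<lambda>y. a * y + c"
    have "mono ?g" by (intro monoI add_right_mono mult_left_mono) auto
    moreover have "isCont ?g (Inf (ennreal ` S))"
      using False unfolding isCont_def
      by (intro tendsto_add ennreal_tendsto_cmult tendsto_ident_at tendsto_const) (auto simp: less_top)
    then have "continuous (at_right (Inf (ennreal ` S))) ?g" by (rule continuous_at_imp_continuous_at_within)
    ultimately have "?g (Inf (ennreal ` S)) = Inf (?g ` ennreal ` S)"
      using False by (intro continuous_at_Inf_mono) auto
    moreover have "x \<le> Inf (?g ` ennreal ` S)"
      using le by (auto simp: S_def mult.commute intro: Inf_greatest)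
    ultimately show ?thesis by (simp add: gi mult.commute)
  qed
qed

lemma weak_poincare_gen_inv:
  fixes M :: "'a::euclidean_space measure" and h :: "real \<Rightarrow> ennreal"
  assumes M: "prob_space M" "sets M = sets borel" and K: "K > 0"
    and pos: "\<And>s. s < 1 \<Longrightarrow> 0 < gen_inv h s"
    and const: "\<And>f. smooth f \<Longrightarrow> (\<integral>\<^sup>+x. ennreal ((norm (grad f x))\<^sup>2) \<partial>M) = 0 \<Longrightarrow> Var M f = 0"
    and est: "\<And>f r. smooth f \<Longrightarrow> bounded (range f) \<Longrightarrow> 0 < r \<Longrightarrow>
      ennreal (Var M f) \<le> ennreal (r * K) * (\<integral>\<^sup>+x. ennreal ((norm (grad f x))\<^sup>2) \<partial>M) + h r * ennreal ((Osc f)\<^sup>2)"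
  shows "weak_poincare M (\<lambda>s. ennreal K * gen_inv h s)"
  unfolding weak_poincare_def
proof (intro conjI allI impI)
  fix s t :: real assume "0 < s" "s \<le> t"
  then show "ennreal K * gen_inv h t \<le> ennreal K * gen_inv h s"
    by (intro mult_left_mono antimono_gen_inv) auto
next
  fix s :: real and f :: "'a \<Rightarrow> real"
  assume s: "0 < s" and f: "smooth f \<and> bounded (range f)"
  define E where "E = (\<integral>\<^sup>+x. ennreal ((norm (grad f x))\<^sup>2) \<partial>M)"
  have "ennreal (Var M f) \<le> ennreal K * gen_inv h s * E + ennreal (s * (Osc f)\<^sup>2)"
  proof (cases "1 \<le> s")
    case True
    have "f \<in> borel_measurable M"
      using Ck1_D(2)[OF smooth_imp_Ck1] f measurable_cong_sets[OF M(2) refl]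
      by (auto intro: borel_measurable_continuous_onI)
    then have "Var M f \<le> 1 * (Osc f)\<^sup>2" using Var_le_Osc_sq[OF M(1)] f by simp
    also have "\<dots> \<le> s * (Osc f)\<^sup>2" using True by (intro mult_right_mono) auto
    finally show ?thesis by (intro add_increasing ennreal_leI) auto
  next
    case False
    show ?thesis
    proof (cases "E = 0")
      case True
      then show ?thesis using const f by (simp add: E_def)
    next
      case E: False
      have "ennreal (Var M f) \<le> gen_inv h s * (ennreal K * E) + ennreal (s * (Osc f)\<^sup>2)"
      proof (rule le_gen_inv_mult_add[OF _ pos])
        fix r assume r: "0 < r" "h r \<le> ennreal s"
        have "ennreal (Var M f) \<le> ennreal (r * K) * E + h r * ennreal ((Osc f)\<^sup>2)"
          using est[OF _ _ r(1)] f by (simp add: E_def)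
        also have "\<dots> \<le> ennreal r * (ennreal K * E) + ennreal (s * (Osc f)\<^sup>2)"
          using r K s by (auto simp: ennreal_mult mult.assoc intro: add_mono mult_right_mono)
        finally show "ennreal (Var M f) \<le> ennreal r * (ennreal K * E) + ennreal (s * (Osc f)\<^sup>2)" .
      qed (use False E K in auto)
      then show ?thesis by (simp add: mult_ac)
    qed
  qed
  then show "ennreal (Var M f) \<le> ennreal K * gen_inv h s * (\<integral>\<^sup>+x. ennreal ((norm (grad f x))\<^sup>2) \<partial>M)
    + ennreal (s * (Osc f)\<^sup>2)" by (simp add: E_def)
qed

section \<open>Localisation under a Lyapunov condition\<close>

lemma localisation_pointwise_le:
  fixes e k \<Psi> \<phi> b m r O2 iB iA :: real
  assumes e: "0 \<le> e" "e \<le> O2" and k: "0 \<le> k" "k \<le> 1"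
    and \<Psi>: "\<phi> - b * iB \<le> \<Psi>" and b: "b \<ge> 0" and m: "m \<ge> 0" "\<phi> \<ge> -m"
    and iB: "0 \<le> iB" "\<phi> < 0 \<Longrightarrow> iB = 1" and r: "r > 0"
    and iA: "iA = (if \<phi> \<le> 1 / r then 1 else 0)"
  shows "e \<le> r * (k * e * \<Psi>) + r * ((b + m) * (iB * e)) + (1 - k) * e + O2 * iA"
proof -
  have ke: "0 \<le> k * e" using k e by simp
  have "k * e * max \<phi> 0 \<le> k * e * \<Psi> + (b + m) * (iB * e)"
  proof (cases "\<phi> < 0")
    case True
    have "k * e * (\<phi> - b) \<le> k * e * \<Psi>" using \<Psi> iB(2)[OF True] ke by (simp add: mult_left_mono)
    moreover have "k * ((b + m) * e) \<le> (b + m) * e" using k e b m by (intro mult_left_le_one_le) auto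
    moreover have "0 \<le> k * e * (\<phi> + m)" using ke m by simp
    ultimately show ?thesis using True iB(2)[OF True] by (simp add: algebra_simps)
  next
    case False
    have "k * e * (\<phi> - b * iB) \<le> k * e * \<Psi>" using \<Psi> ke by (simp add: mult_left_mono)
    moreover have "k * e * (b * iB) \<le> (b + m) * (iB * e)"
      using k e b m iB(1) mult_left_le_one_le[of "b * iB * e" k]
      by (simp add: algebra_simps add_increasing2)
    ultimately show ?thesis using False by (simp add: algebra_simps)
  qed
  then have main: "r * (k * e * max \<phi> 0) \<le> r * (k * e * \<Psi>) + r * ((b + m) * (iB * e))"
    using r by (simp add: distrib_left[symmetric] mult_left_mono)
  show ?thesis
  proof (cases "\<phi> \<le> 1 / r")
    case True
    moreover have "0 \<le> r * (k * e * max \<phi> 0)" "0 \<le> (1 - k) * e" using r ke k e by simp_all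
    ultimately show ?thesis using main iA e by simp
  next
    case False
    then have "\<phi> > 0" using r by (meson less_trans not_le zero_less_divide_1_iff)
    have "1 \<le> r * \<phi>" using False r by (simp add: field_simps)
    then have "k * e \<le> r * (k * e * max \<phi> 0)"
      using mult_left_mono[OF \<open>1 \<le> r * \<phi>\<close> ke] \<open>\<phi> > 0\<close> by (simp add: algebra_simps)
    moreover have "iA = 0" "(1 - k) * e = e - k * e" using iA False by (simp_all add: algebra_simps)
    ultimately show ?thesis using main by simp
  qed
qed

lemma power2_sum_le_twice:
  fixes a b :: real
  shows "(a + b)\<^sup>2 \<le> 2 * a\<^sup>2 + 2 * b\<^sup>2"
proof -
  have "0 \<le> (a - b)\<^sup>2" by simp
  then show ?thesis by (simp add: power2_eq_square algebra_simps)
qed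

lemma norm_cutoff_product_grad_le:
  fixes G :: "'a::euclidean_space"
  assumes N: "N > 0" and a: "\<bar>a\<bar> \<le> Os"
  shows "(norm (cutoff N x *\<^sub>R G + a *\<^sub>R cutoff_grad N x))\<^sup>2 \<le> 2 * (norm G)\<^sup>2 + 2 * (Os * (4 / N))\<^sup>2"
proof -
  have "norm (cutoff N x *\<^sub>R G) \<le> norm G"
    using cutoff_nonneg[of N x] cutoff_le_1[of N x] by (simp add: mult_left_le_one_le)
  moreover have "norm (a *\<^sub>R cutoff_grad N x) \<le> Os * (4 / N)"
    using mult_mono[OF a norm_cutoff_grad_le[OF N, of x]] a by simp
  ultimately have "norm (cutoff N x *\<^sub>R G + a *\<^sub>R cutoff_grad N x) \<le> norm G + Os * (4 / N)"
    by (meson add_mono norm_triangle_ineq order_trans)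
  then have "(norm (cutoff N x *\<^sub>R G + a *\<^sub>R cutoff_grad N x))\<^sup>2 \<le> (norm G + Os * (4 / N))\<^sup>2"
    by (simp add: power_mono)
  also have "\<dots> \<le> 2 * (norm G)\<^sup>2 + 2 * (Os * (4 / N))\<^sup>2"
    by (rule power2_sum_le_twice)
  finally show ?thesis .
qed

locale lyapunov_perturbation =
  fixes W U F \<phi> :: "'a::euclidean_space \<Rightarrow> real" and b R :: real
  assumes W_C1: "Ck 1 W" and U_C1: "Ck 1 U" and F_C2: "Ck 2 F" and F_pos: "\<And>x. F x > 0"
    and \<phi>_cont: "continuous_on UNIV \<phi>" and b_nonneg: "b \<ge> 0"
    and lyapunov: "\<And>x. LW W F x / F x \<le> - \<phi> x + b * indicator (ball 0 R) x"
    and \<mu>_prob: "prob_space (density lborel (\<lambda>x. ennreal (exp (- U x) * exp (- W x))))"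
    and \<phi>U_eventually_pos: "\<exists>R0. \<forall>x. norm x \<ge> R0 \<longrightarrow> \<phi> x + (grad U x \<bullet> grad F x) / F x > 0"
begin

definition \<rho> :: "'a \<Rightarrow> real" where
  "\<rho> x = exp (- U x) * exp (- W x)"

definition \<phi>U :: "'a \<Rightarrow> real" where
  "\<phi>U x = \<phi> x + (grad U x \<bullet> grad F x) / F x"

definition \<Psi> :: "'a \<Rightarrow> real" where
  "\<Psi> x = - (LW W F x - grad U x \<bullet> grad F x) / F x"

abbreviation \<mu> :: "'a measure" where
  "\<mu> \<equiv> density lborel (\<lambda>x. ennreal (\<rho> x))"

lemma prob_space_\<mu>: "prob_space \<mu>"
  using \<mu>_prob by (simp add: \<rho>_def[abs_def])

lemma \<rho>_pos: "\<rho> x > 0"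
  by (simp add: \<rho>_def)

lemma continuous_on_\<rho>: "continuous_on UNIV \<rho>"
  unfolding \<rho>_def[abs_def] using Ck1_D(2)[OF U_C1] Ck1_D(2)[OF W_C1] by (intro continuous_intros)

lemma borel_measurable_\<rho>[measurable]: "\<rho> \<in> borel_measurable borel"
  using continuous_on_\<rho> by (rule borel_measurable_continuous_onI)

lemma nn_integral_\<rho>: "(\<integral>\<^sup>+x. ennreal (\<rho> x) \<partial>lborel) = 1"
  using prob_space.emeasure_space_1[OF prob_space_\<mu>] by (simp add: emeasure_density)

lemma integrable_\<rho>: "integrable lborel \<rho>"
  using nn_integral_\<rho> \<rho>_pos by (intro integrableI_nonneg) (auto intro: less_imp_le)

lemma integral_\<rho>: "(\<integral>x. \<rho> x \<partial>lborel) = 1"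
  using nn_integral_eq_integral[OF integrable_\<rho>] nn_integral_\<rho> \<rho>_pos
  by (metis AE_I2 ennreal_eq_1 integral_nonneg_AE less_imp_le)

lemma integrable_\<rho>_mult_bounded:
  assumes [measurable]: "h \<in> borel_measurable borel" and "\<And>x. \<bar>h x\<bar> \<le> M"
  shows "integrable lborel (\<lambda>x. \<rho> x * h x)"
proof (rule Bochner_Integration.integrable_bound[where f="\<lambda>x. M * \<rho> x"])
  show "integrable lborel (\<lambda>x. M * \<rho> x)" using integrable_\<rho> by simp
  have "\<bar>h x\<bar> \<le> \<bar>M\<bar>" for x using assms(2)[of x] by linarith
  then show "AE x in lborel. norm (\<rho> x * h x) \<le> norm (M * \<rho> x)"
    using \<rho>_pos by (intro AE_I2) (simp add: abs_mult mult_left_mono mult.commute less_imp_le)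
qed simp

lemma continuous_on_\<phi>U: "continuous_on UNIV \<phi>U"
  unfolding \<phi>U_def[abs_def]
  using \<phi>_cont Ck1_D(4)[OF U_C1] Ck1_D(2,4)[OF Ck2_D(1)[OF F_C2]] F_pos
  by (intro continuous_intros) (auto simp: less_imp_neq[symmetric])

lemma borel_measurable_\<phi>U[measurable]: "\<phi>U \<in> borel_measurable borel"
  using continuous_on_\<phi>U by (rule borel_measurable_continuous_onI)

lemma continuous_on_\<Psi>: "continuous_on UNIV \<Psi>"
proof -
  note F1 = Ck1_D[OF Ck2_D(1)[OF F_C2]]
  have "continuous_on UNIV (lap F)"
    unfolding lap_def[abs_def] using Ck1_D(3)[OF Ck2_D(2)[OF F_C2]] by (intro continuous_intros) auto
  then show ?thesis
    unfolding \<Psi>_def[abs_def] LW_def using F1(2,4) Ck1_D(4)[OF U_C1] Ck1_D(4)[OF W_C1] F_pos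
    by (intro continuous_intros) (auto simp: less_imp_neq[symmetric])
qed

lemma lyapunov_\<phi>U: "\<phi>U x - b * indicator (ball 0 R) x \<le> \<Psi> x"
  using lyapunov[of x] by (simp add: \<phi>U_def \<Psi>_def diff_divide_distrib)

lemma localisation_radius:
  obtains R1 m where "R \<le> R1" "0 < R1" "0 \<le> m" "\<And>x. \<phi>U x \<ge> - m" "\<And>x. \<phi>U x < 0 \<Longrightarrow> norm x \<le> R1"
proof -
  obtain R0 where R0: "\<And>x. norm x \<ge> R0 \<Longrightarrow> \<phi>U x > 0"
    using \<phi>U_eventually_pos unfolding \<phi>U_def by blast
  define R1 where "R1 = max (max R R0) 1"
  obtain M where M: "\<And>y. y \<in> \<phi>U ` cball 0 R1 \<Longrightarrow> norm y \<le> M"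
    using compact_imp_bounded[OF compact_continuous_image[OF continuous_on_subset[OF continuous_on_\<phi>U] compact_cball]]
    unfolding bounded_iff by blast
  have "\<phi>U x \<ge> - max M 0" for x
  proof (cases "norm x \<le> R1")
    case True
    then show ?thesis using M[of "\<phi>U x"] by auto
  next
    case False
    then have "R0 \<le> norm x" by (simp add: R1_def)
    then show ?thesis using R0[of x] by simp
  qed
  moreover have "norm x \<le> R1" if "\<phi>U x < 0" for x
    using R0[of x] that by (cases "norm x \<ge> R0") (auto simp: R1_def)
  ultimately show ?thesis using that[of R1 "max M 0"] by (simp add: R1_def)
qed

lemma tendsto_integral_outside_cutoff:
  assumes [measurable]: "g \<in> borel_measurable borel" and g: "\<And>x. \<bar>g x\<bar> \<le> M"
  shows "(\<lambda>n. \<integral>x. \<rho> x * ((1 - (cutoff (real n + 1) x)\<^sup>2) * g x) \<partial>lborel) \<longlonglongrightarrow> 0"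
proof -
  have [measurable]: "cutoff N \<in> borel_measurable borel" for N :: real
    using continuous_on_cutoff by (rule borel_measurable_continuous_onI)
  have "(\<lambda>n. \<integral>x. \<rho> x * ((1 - (cutoff (real n + 1) x)\<^sup>2) * g x) \<partial>lborel) \<longlonglongrightarrow> (\<integral>x. (0::real) \<partial>(lborel :: 'a measure))"
  proof (rule integral_dominated_convergence[where w="\<lambda>x. \<rho> x * M"])
    show "integrable lborel (\<lambda>x. \<rho> x * M)" using integrable_\<rho> by simp
    have "(\<lambda>n. \<rho> x * ((1 - (cutoff (real n + 1) x)\<^sup>2) * g x)) \<longlonglongrightarrow> \<rho> x * ((1 - 1\<^sup>2) * g x)" for x
      by (intro tendsto_intros cutoff_tendsto_1)
    then show "AE x in lborel. (\<lambda>n. \<rho> x * ((1 - (cutoff (real n + 1) x)\<^sup>2) * g x)) \<longlonglongrightarrow> 0"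
      by simp
    show "AE x in lborel. norm (\<rho> x * ((1 - (cutoff (real n + 1) x)\<^sup>2) * g x)) \<le> \<rho> x * M" for n
    proof (intro AE_I2)
      fix x :: 'a
      have "0 \<le> 1 - (cutoff (real n + 1) x)\<^sup>2" "1 - (cutoff (real n + 1) x)\<^sup>2 \<le> 1"
        using power_le_one[OF cutoff_nonneg cutoff_le_1] by simp_all
      then have "\<bar>(1 - (cutoff (real n + 1) x)\<^sup>2) * g x\<bar> \<le> \<bar>g x\<bar>"
        by (simp add: abs_mult mult_left_le_one_le)
      then have "\<bar>(1 - (cutoff (real n + 1) x)\<^sup>2) * g x\<bar> \<le> M"
        using g[of x] by linarith
      then show "norm (\<rho> x * ((1 - (cutoff (real n + 1) x)\<^sup>2) * g x)) \<le> \<rho> x * M"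
        using \<rho>_pos[of x] by (simp add: abs_mult mult_left_mono)
    qed
  qed simp_all
  then show ?thesis by simp
qed

lemma integral_cutoff_lyapunov_le:
  fixes f :: "'a \<Rightarrow> real"
  assumes f: "Ck 1 f" and osc: "\<And>x. \<bar>f x - c\<bar> \<le> Os"
    and energy_int: "integrable lborel (\<lambda>x. \<rho> x * (norm (grad f x))\<^sup>2)" and N: "N > 0"
  shows "integrable lborel (\<lambda>x. \<rho> x * (((f x - c) * cutoff N x)\<^sup>2 * \<Psi> x))"
    and "(\<integral>x. \<rho> x * (((f x - c) * cutoff N x)\<^sup>2 * \<Psi> x) \<partial>lborel)
      \<le> 2 * (\<integral>x. \<rho> x * (norm (grad f x))\<^sup>2 \<partial>lborel) + 32 * Os\<^sup>2 / N\<^sup>2"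
proof -
  note fD = Ck1_D[OF f]
  define g where "g x = (f x - c) * cutoff N x" for x
  define Gg where "Gg x = cutoff N x *\<^sub>R grad f x + (f x - c) *\<^sub>R cutoff_grad N x" for x
  have g_deriv: "(g has_derivative (\<lambda>v. Gg x \<bullet> v)) (at x)" for x
    unfolding g_def[abs_def]
    by (rule has_derivative_eq_rhs, (rule derivative_eq_intros fD(1) cutoff_has_derivative refl)+)
      (simp add: fun_eq_iff Gg_def inner_add_left algebra_simps)
  have Gg_cont: "continuous_on UNIV Gg"
    unfolding Gg_def[abs_def] using continuous_on_cutoff fD(2,4) continuous_on_cutoff_grad
    by (intro continuous_intros)
  have g_supp: "g x = 0" if "norm x \<ge> N" for x using cutoff_eq_0[OF N that] by (simp add: g_def)
  show "integrable lborel (\<lambda>x. \<rho> x * (((f x - c) * cutoff N x)\<^sup>2 * \<Psi> x))"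
    by (rule integrable_continuous_zero_outside[of _ N])
      (use g_supp continuous_on_\<rho> continuous_on_\<Psi> continuous_on_cutoff fD(2) in
        \<open>auto simp: g_def intro!: continuous_intros\<close>)
  have Gg_supp: "Gg x = 0" if "norm x > N" for x using grad_zero_outside_ball[OF g_deriv g_supp that] .
  have "(\<integral>x. \<rho> x * (g x ^ 2 * \<Psi> x) \<partial>lborel) \<le> (\<integral>x. \<rho> x * (norm (Gg x))\<^sup>2 \<partial>lborel)"
    using lyapunov_integration_by_parts[OF W_C1 U_C1 F_C2 F_pos g_deriv Gg_cont g_supp]
    by (simp add: \<rho>_def \<Psi>_def)
  also have "\<dots> \<le> (\<integral>x. 2 * (\<rho> x * (norm (grad f x))\<^sup>2) + (2 * (Os * (4 / N))\<^sup>2) * \<rho> x \<partial>lborel)"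
  proof (rule integral_mono)
    show "integrable lborel (\<lambda>x. \<rho> x * (norm (Gg x))\<^sup>2)"
      by (rule integrable_continuous_zero_outside[of _ N])
        (use Gg_supp continuous_on_\<rho> Gg_cont in \<open>auto intro!: continuous_intros\<close>)
    show "integrable lborel (\<lambda>x. 2 * (\<rho> x * (norm (grad f x))\<^sup>2) + (2 * (Os * (4 / N))\<^sup>2) * \<rho> x)"
      using energy_int integrable_\<rho> by simp
    show "\<rho> x * (norm (Gg x))\<^sup>2 \<le> 2 * (\<rho> x * (norm (grad f x))\<^sup>2) + (2 * (Os * (4 / N))\<^sup>2) * \<rho> x" for x
      using mult_left_mono[OF norm_cutoff_product_grad_le[OF N osc[of x], of x "grad f x"], of "\<rho> x"] \<rho>_pos[of x]
      by (simp add: Gg_def algebra_simps)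
  qed
  also have "\<dots> = 2 * (\<integral>x. \<rho> x * (norm (grad f x))\<^sup>2 \<partial>lborel) + 32 * Os\<^sup>2 / N\<^sup>2"
    using energy_int integrable_\<rho> integral_\<rho> by (simp add: power_mult_distrib power_divide)
  finally show "(\<integral>x. \<rho> x * (((f x - c) * cutoff N x)\<^sup>2 * \<Psi> x) \<partial>lborel)
      \<le> 2 * (\<integral>x. \<rho> x * (norm (grad f x))\<^sup>2 \<partial>lborel) + 32 * Os\<^sup>2 / N\<^sup>2"
    by (simp add: g_def)
qed

lemma cutoff_pointwise_le:
  assumes R1: "R \<le> R1" and m: "0 \<le> m" "\<And>x. \<phi>U x \<ge> - m" and neg: "\<And>x. \<phi>U x < 0 \<Longrightarrow> norm x \<le> R1"
    and osc: "\<bar>f x - c\<bar> \<le> Os" and r: "r > 0"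
  shows "\<rho> x * (f x - c)\<^sup>2 \<le> r * (\<rho> x * (((f x - c) * cutoff N x)\<^sup>2 * \<Psi> x))
      + (r * (b + m)) * (\<rho> x * (indicator (cball 0 R1) x * (f x - c)\<^sup>2))
      + \<rho> x * ((1 - (cutoff N x)\<^sup>2) * (f x - c)\<^sup>2) + Os\<^sup>2 * (\<rho> x * indicator {x. \<phi>U x \<le> 1 / r} x)"
proof -
  have "indicator (ball 0 R) x \<le> (indicator (cball 0 R1) x :: real)"
    using R1 by (auto simp: indicator_def)
  then have "\<phi>U x - b * indicator (cball 0 R1) x \<le> \<Psi> x"
    using lyapunov_\<phi>U[of x] mult_left_mono[OF _ b_nonneg] by (smt (verit))
  then have "(f x - c)\<^sup>2 \<le> r * ((cutoff N x)\<^sup>2 * (f x - c)\<^sup>2 * \<Psi> x)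
      + r * ((b + m) * (indicator (cball 0 R1) x * (f x - c)\<^sup>2))
      + (1 - (cutoff N x)\<^sup>2) * (f x - c)\<^sup>2 + Os\<^sup>2 * indicator {x. \<phi>U x \<le> 1 / r} x" (is "_ \<le> ?R")
    using power_mono[OF osc abs_ge_zero, of 2] cutoff_nonneg[of N x] cutoff_le_1[of N x]
      b_nonneg m neg[of x] r
    by (intro localisation_pointwise_le) (auto simp: indicator_def power_le_one)
  then have "\<rho> x * (f x - c)\<^sup>2 \<le> \<rho> x * ?R"
    by (rule mult_left_mono[OF _ less_imp_le[OF \<rho>_pos]])
  then show ?thesis
    unfolding power_mult_distrib by (simp add: algebra_simps)
qed

text \<open>The localised function \<open>(f - c) \<chi>\<^sub>N\<close> is compactly supported, so the Lyapunov inequality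
  controls its weighted \<open>L\<^sup>2\<close> norm where \<open>\<phi>U > 1 / r\<close>; the ball where \<open>\<phi>U\<close> may be negative
  is handled by the local Poincare inequality, and the rest of \<open>{\<phi>U \<le> 1 / r}\<close> by the
  oscillation.\<close>
lemma cutoff_estimate:
  fixes f :: "'a \<Rightarrow> real"
  assumes R1: "R \<le> R1" and m: "0 \<le> m" "\<And>x. \<phi>U x \<ge> - m" and neg: "\<And>x. \<phi>U x < 0 \<Longrightarrow> norm x \<le> R1"
    and f: "Ck 1 f" and osc: "\<And>x. \<bar>f x - c\<bar> \<le> Os"
    and energy_int: "integrable lborel (\<lambda>x. \<rho> x * (norm (grad f x))\<^sup>2)"
    and local: "(\<integral>x. \<rho> x * (indicator (cball 0 R1) x * (f x - c)\<^sup>2) \<partial>lborel)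
      \<le> P * (\<integral>x. \<rho> x * (norm (grad f x))\<^sup>2 \<partial>lborel)"
    and r: "r > 0" and N: "N > 0"
  shows "(\<integral>x. \<rho> x * (f x - c)\<^sup>2 \<partial>lborel)
    \<le> r * (2 + (b + m) * P) * (\<integral>x. \<rho> x * (norm (grad f x))\<^sup>2 \<partial>lborel)
      + (\<integral>x. \<rho> x * indicator {x. \<phi>U x \<le> 1 / r} x \<partial>lborel) * Os\<^sup>2
      + 32 * r * Os\<^sup>2 / N\<^sup>2 + (\<integral>x. \<rho> x * ((1 - (cutoff N x)\<^sup>2) * (f x - c)\<^sup>2) \<partial>lborel)"
proof -
  define E where "E = (\<integral>x. \<rho> x * (norm (grad f x))\<^sup>2 \<partial>lborel)"
  define A where "A = {x. \<phi>U x \<le> 1 / r}"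
  define B where "B = cball (0::'a) R1"
  define g2\<Psi> where "g2\<Psi> x = ((f x - c) * cutoff N x)\<^sup>2 * \<Psi> x" for x
  have [measurable]: "f \<in> borel_measurable borel" "cutoff N \<in> borel_measurable borel"
    using Ck1_D(2)[OF f] continuous_on_cutoff by (auto intro: borel_measurable_continuous_onI)
  have [measurable]: "A \<in> sets borel" "B \<in> sets borel" by (auto simp: A_def B_def)
  have sq_le: "(f x - c)\<^sup>2 \<le> Os\<^sup>2" for x using power_mono[OF osc[of x] abs_ge_zero, of 2] by simp
  have int_g: "integrable lborel (\<lambda>x. \<rho> x * g2\<Psi> x)"
    using integral_cutoff_lyapunov_le(1)[OF f osc energy_int N] by (simp add: g2\<Psi>_def)
  have int_B: "integrable lborel (\<lambda>x. \<rho> x * (indicator B x * (f x - c)\<^sup>2))"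
    using sq_le by (intro integrable_\<rho>_mult_bounded[where M="Os\<^sup>2"]) (auto simp: indicator_def)
  have int_cut: "integrable lborel (\<lambda>x. \<rho> x * ((1 - (cutoff N x)\<^sup>2) * (f x - c)\<^sup>2))"
  proof (rule integrable_\<rho>_mult_bounded[where M="Os\<^sup>2"])
    fix x :: 'a
    have "0 \<le> 1 - (cutoff N x)\<^sup>2" "1 - (cutoff N x)\<^sup>2 \<le> 1"
      using power_le_one[OF cutoff_nonneg cutoff_le_1] by simp_all
    then have "(1 - (cutoff N x)\<^sup>2) * (f x - c)\<^sup>2 \<le> (f x - c)\<^sup>2"
      by (simp add: mult_left_le_one_le)
    then show "\<bar>(1 - (cutoff N x)\<^sup>2) * (f x - c)\<^sup>2\<bar> \<le> Os\<^sup>2"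
      using \<open>0 \<le> 1 - (cutoff N x)\<^sup>2\<close> sq_le[of x] by simp
  qed simp
  have int_A: "integrable lborel (\<lambda>x. \<rho> x * indicator A x)"
    by (rule integrable_\<rho>_mult_bounded[where M=1]) auto
  have "(\<integral>x. \<rho> x * (f x - c)\<^sup>2 \<partial>lborel) \<le> (\<integral>x. r * (\<rho> x * g2\<Psi> x)
      + (r * (b + m)) * (\<rho> x * (indicator B x * (f x - c)\<^sup>2))
      + \<rho> x * ((1 - (cutoff N x)\<^sup>2) * (f x - c)\<^sup>2) + Os\<^sup>2 * (\<rho> x * indicator A x) \<partial>lborel)"
    using sq_le int_g int_B int_cut int_A cutoff_pointwise_le[OF R1 m neg osc r]
    by (intro integral_mono integrable_\<rho>_mult_bounded[where M="Os\<^sup>2"]) (auto simp: g2\<Psi>_def A_def B_def)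
  also have "\<dots> = r * (\<integral>x. \<rho> x * g2\<Psi> x \<partial>lborel)
      + (r * (b + m)) * (\<integral>x. \<rho> x * (indicator B x * (f x - c)\<^sup>2) \<partial>lborel)
      + (\<integral>x. \<rho> x * ((1 - (cutoff N x)\<^sup>2) * (f x - c)\<^sup>2) \<partial>lborel) + Os\<^sup>2 * (\<integral>x. \<rho> x * indicator A x \<partial>lborel)"
    using int_g int_B int_cut int_A by simp
  also have "\<dots> \<le> r * (2 * E + 32 * Os\<^sup>2 / N\<^sup>2) + (r * (b + m)) * (P * E)
      + (\<integral>x. \<rho> x * ((1 - (cutoff N x)\<^sup>2) * (f x - c)\<^sup>2) \<partial>lborel) + Os\<^sup>2 * (\<integral>x. \<rho> x * indicator A x \<partial>lborel)"
  proof -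
    have "r * (\<integral>x. \<rho> x * g2\<Psi> x \<partial>lborel) \<le> r * (2 * E + 32 * Os\<^sup>2 / N\<^sup>2)"
      using integral_cutoff_lyapunov_le(2)[OF f osc energy_int N] r
      by (intro mult_left_mono) (auto simp: g2\<Psi>_def E_def)
    moreover have "(r * (b + m)) * (\<integral>x. \<rho> x * (indicator B x * (f x - c)\<^sup>2) \<partial>lborel)
        \<le> (r * (b + m)) * (P * E)"
      using local r b_nonneg m(1) by (intro mult_left_mono) (auto simp: E_def B_def)
    ultimately show ?thesis by linarith
  qed
  finally show ?thesis by (simp add: E_def A_def algebra_simps)
qed

lemma weighted_L2_estimate:
  obtains K where "K > 0"
    and "\<And>f r. Ck 1 f \<Longrightarrow> bounded (range f) \<Longrightarrow> integrable lborel (\<lambda>x. \<rho> x * (norm (grad f x))\<^sup>2) \<Longrightarrow>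
      r > 0 \<Longrightarrow> \<exists>c. (\<integral>x. \<rho> x * (f x - c)\<^sup>2 \<partial>lborel)
        \<le> r * K * (\<integral>x. \<rho> x * (norm (grad f x))\<^sup>2 \<partial>lborel)
          + (\<integral>x. \<rho> x * indicator {x. \<phi>U x \<le> 1 / r} x \<partial>lborel) * (Osc f)\<^sup>2"
proof -
  obtain R1 m where R1: "R \<le> R1" "0 < R1" and m: "0 \<le> m" "\<And>x. \<phi>U x \<ge> - m"
    and neg: "\<And>x. \<phi>U x < 0 \<Longrightarrow> norm x \<le> R1"
    using localisation_radius by blast
  define B where "B = cball (0::'a) R1"
  have B: "convex B" "compact B" "0 < measure lborel B" using R1 by (simp_all add: B_def)
  obtain P where P: "P \<ge> 0" and local: "\<And>f G. (\<And>x. (f has_derivative (\<lambda>v. G x \<bullet> v)) (at x)) \<Longrightarrow>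
      continuous_on UNIV G \<Longrightarrow> integrable lborel (\<lambda>x. \<rho> x * (norm (G x))\<^sup>2) \<Longrightarrow>
      (\<integral>x. \<rho> x * (indicator B x * (f x - (\<integral>y. indicator B y * f y \<partial>lborel) / measure lborel B)\<^sup>2) \<partial>lborel)
        \<le> P * (\<integral>x. \<rho> x * (norm (G x))\<^sup>2 \<partial>lborel)"
    using weighted_poincare_convex[OF continuous_on_\<rho> \<rho>_pos B] by blast
  define K where "K = 2 + (b + m) * P"
  show ?thesis
  proof (rule that)
    show "K > 0" using b_nonneg m P by (simp add: K_def add_pos_nonneg)
    fix f :: "'a \<Rightarrow> real" and r :: real
    assume f: "Ck 1 f" and f_bounded: "bounded (range f)"
      and energy_int: "integrable lborel (\<lambda>x. \<rho> x * (norm (grad f x))\<^sup>2)" and r: "r > 0"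
    define c where "c = (\<integral>y. indicator B y * f y \<partial>lborel) / measure lborel B"
    define E where "E = (\<integral>x. \<rho> x * (norm (grad f x))\<^sup>2 \<partial>lborel)"
    define \<mu>A where "\<mu>A = (\<integral>x. \<rho> x * indicator {x. \<phi>U x \<le> 1 / r} x \<partial>lborel)"
    define \<delta> where "\<delta> n = (\<integral>x. \<rho> x * ((1 - (cutoff (real n + 1) x)\<^sup>2) * (f x - c)\<^sup>2) \<partial>lborel)" for n
    note fD = Ck1_D[OF f]
    have osc: "\<bar>f x - c\<bar> \<le> Osc f" for x
      using average_between_Inf_Sup[OF f_bounded fD(2) B(2,3)] by (intro abs_diff_le_Osc f_bounded) (simp_all add: c_def)
    have bound: "(\<integral>x. \<rho> x * (f x - c)\<^sup>2 \<partial>lborel)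
        \<le> r * K * E + \<mu>A * (Osc f)\<^sup>2 + (32 * r * (Osc f)\<^sup>2 / (real n + 1)\<^sup>2 + \<delta> n)" for n
      using cutoff_estimate[OF R1(1) m neg f osc energy_int _ r, of P "real n + 1"]
        local[OF fD(1,4) energy_int]
      by (simp add: K_def E_def \<mu>A_def \<delta>_def c_def B_def add.assoc)
    have "f \<in> borel_measurable borel" using fD(2) by (rule borel_measurable_continuous_onI)
    then have "\<delta> \<longlonglongrightarrow> 0"
      unfolding \<delta>_def using power_mono[OF osc abs_ge_zero, of _ 2]
      by (intro tendsto_integral_outside_cutoff[where M="(Osc f)\<^sup>2"]) auto
    moreover have "(\<lambda>n. 32 * r * (Osc f)\<^sup>2 / (real n + 1)\<^sup>2) \<longlonglongrightarrow> 0"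
      using tendsto_mult[OF tendsto_const tendsto_power[OF LIMSEQ_inverse_real_of_nat], of "32 * r * (Osc f)\<^sup>2" 2]
      by (simp add: power_inverse divide_inverse add.commute)
    ultimately have "(\<lambda>n. r * K * E + \<mu>A * (Osc f)\<^sup>2 + (32 * r * (Osc f)\<^sup>2 / (real n + 1)\<^sup>2 + \<delta> n))
        \<longlonglongrightarrow> r * K * E + \<mu>A * (Osc f)\<^sup>2 + (0 + 0)"
      by (intro tendsto_intros)
    then have "(\<integral>x. \<rho> x * (f x - c)\<^sup>2 \<partial>lborel) \<le> r * K * E + \<mu>A * (Osc f)\<^sup>2"
      using bound by (intro LIMSEQ_le_const) auto
    then show "\<exists>c. (\<integral>x. \<rho> x * (f x - c)\<^sup>2 \<partial>lborel) \<le> r * K * E + \<mu>A * (Osc f)\<^sup>2" ..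
  qed
qed

lemma nn_integral_\<mu>:
  assumes [measurable]: "h \<in> borel_measurable borel" and "\<And>x. 0 \<le> h x"
  shows "(\<integral>\<^sup>+x. ennreal (h x) \<partial>\<mu>) = (\<integral>\<^sup>+x. ennreal (\<rho> x * h x) \<partial>lborel)"
  using assms(2) \<rho>_pos by (simp add: nn_integral_density ennreal_mult less_imp_le)

lemma emeasure_\<mu>:
  assumes [measurable]: "A \<in> sets borel"
  shows "emeasure \<mu> A = ennreal (\<integral>x. \<rho> x * indicator A x \<partial>lborel)"
proof -
  have "integrable lborel (\<lambda>x. \<rho> x * indicator A x)"
    by (rule integrable_\<rho>_mult_bounded[where M=1]) auto
  then show ?thesis
    using \<rho>_pos
    by (simp add: emeasure_density nn_integral_eq_integral[symmetric] less_imp_le mult.commute)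
      (auto intro!: nn_integral_cong split: split_indicator)
qed

lemma variance_estimate:
  obtains K where "K > 0"
    and "\<And>f r. smooth f \<Longrightarrow> bounded (range f) \<Longrightarrow> 0 < r \<Longrightarrow>
      ennreal (Var \<mu> f) \<le> ennreal (r * K) * (\<integral>\<^sup>+x. ennreal ((norm (grad f x))\<^sup>2) \<partial>\<mu>)
        + emeasure \<mu> {x. \<phi>U x \<le> 1 / r} * ennreal ((Osc f)\<^sup>2)"
proof -
  obtain K where K: "K > 0" and L2: "\<And>f r. Ck 1 f \<Longrightarrow> bounded (range f) \<Longrightarrow>
      integrable lborel (\<lambda>x. \<rho> x * (norm (grad f x))\<^sup>2) \<Longrightarrow> r > 0 \<Longrightarrow>
      \<exists>c. (\<integral>x. \<rho> x * (f x - c)\<^sup>2 \<partial>lborel)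
        \<le> r * K * (\<integral>x. \<rho> x * (norm (grad f x))\<^sup>2 \<partial>lborel)
          + (\<integral>x. \<rho> x * indicator {x. \<phi>U x \<le> 1 / r} x \<partial>lborel) * (Osc f)\<^sup>2"
    using weighted_L2_estimate by blast
  show ?thesis
  proof (rule that[OF K])
    fix f :: "'a \<Rightarrow> real" and r :: real
    assume f: "smooth f" and f_bounded: "bounded (range f)" and r: "0 < r"
    note fD = Ck1_D[OF smooth_imp_Ck1[OF f]]
    have [measurable]: "f \<in> borel_measurable borel" "grad f \<in> borel_measurable borel"
      using fD(2,4) by (auto intro: borel_measurable_continuous_onI)
    define A where "A = {x. \<phi>U x \<le> 1 / r}"
    have [measurable]: "A \<in> sets borel" by (simp add: A_def)
    define E where "E = (\<integral>\<^sup>+x. ennreal ((norm (grad f x))\<^sup>2) \<partial>\<mu>)"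
    have E: "E = (\<integral>\<^sup>+x. ennreal (\<rho> x * (norm (grad f x))\<^sup>2) \<partial>lborel)"
      unfolding E_def by (rule nn_integral_\<mu>) auto
    show "ennreal (Var \<mu> f) \<le> ennreal (r * K) * E + emeasure \<mu> A * ennreal ((Osc f)\<^sup>2)"
    proof (cases "E = \<top>")
      case True
      then show ?thesis using r K by (simp add: ennreal_mult_eq_top_iff)
    next
      case False
      have energy_int: "integrable lborel (\<lambda>x. \<rho> x * (norm (grad f x))\<^sup>2)"
        using False \<rho>_pos by (intro integrableI_nonneg) (auto simp: E less_top less_imp_le)
      then have E_eq: "E = ennreal (\<integral>x. \<rho> x * (norm (grad f x))\<^sup>2 \<partial>lborel)"
        using \<rho>_pos by (simp add: E nn_integral_eq_integral less_imp_le)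
      obtain c where c: "(\<integral>x. \<rho> x * (f x - c)\<^sup>2 \<partial>lborel)
        \<le> r * K * (\<integral>x. \<rho> x * (norm (grad f x))\<^sup>2 \<partial>lborel) + (\<integral>x. \<rho> x * indicator A x \<partial>lborel) * (Osc f)\<^sup>2"
        using L2[OF smooth_imp_Ck1[OF f] f_bounded energy_int r] by (auto simp: A_def)
      obtain B where "\<And>x. \<bar>f x\<bar> \<le> B" using f_bounded unfolding bounded_iff by auto
      then have "Var \<mu> f \<le> (\<integral>x. (f x - c)\<^sup>2 \<partial>\<mu>)"
        by (intro Var_le_integral_sq_diff prob_space_\<mu>) auto
      also have "\<dots> = (\<integral>x. \<rho> x * (f x - c)\<^sup>2 \<partial>lborel)"
        using \<rho>_pos by (subst integral_density) (auto intro: less_imp_le)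
      finally have "ennreal (Var \<mu> f) \<le> ennreal (r * K * (\<integral>x. \<rho> x * (norm (grad f x))\<^sup>2 \<partial>lborel)
          + (\<integral>x. \<rho> x * indicator A x \<partial>lborel) * (Osc f)\<^sup>2)"
        using c by (intro ennreal_leI) simp
      also have "\<dots> = ennreal (r * K) * E + emeasure \<mu> A * ennreal ((Osc f)\<^sup>2)"
        using r K \<rho>_pos
        by (simp add: E_eq emeasure_\<mu> ennreal_plus ennreal_mult integral_nonneg_AE less_imp_le mult.assoc)
      finally show ?thesis .
    qed
  qed
qed

lemma emeasure_\<mu>_le_hU:
  "emeasure \<mu> {x. \<phi>U x \<le> 1 / r} \<le> hU (density lborel (\<lambda>x. ennreal (exp (- W x)))) U \<phi>U r"
proof -
  have [measurable]: "U \<in> borel_measurable borel" "W \<in> borel_measurable borel"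
    using Ck1_D(2)[OF U_C1] Ck1_D(2)[OF W_C1] by (auto intro: borel_measurable_continuous_onI)
  show ?thesis
    using emeasure_density_mult_le_SUP[of "\<lambda>x. ennreal (exp (- U x))" lborel "\<lambda>x. ennreal (exp (- W x))"]
    by (simp add: hU_def \<rho>_def ennreal_mult)
qed

end

theorem theorem2p4:
  fixes W U F \<phi> :: "'a::euclidean_space \<Rightarrow> real" and b R :: real
  assumes W_C1: "Ck 1 W"
    and \<nu>_prob: "prob_space (density lborel (\<lambda>x. ennreal (exp (- W x))))"
    and b_pos: "b > 0" and R_pos: "R > 0"
    and \<phi>_cont: "continuous_on UNIV \<phi>" and \<phi>_pos: "\<forall>x. \<phi> x > 0"
    and F_C2: "Ck 2 F" and F_ge1: "\<forall>x. F x \<ge> 1"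
    and Lyap: "\<forall>x. LW W F x / F x \<le> - \<phi> x + b * indicator (ball 0 R) x"
    and U_smooth: "smooth U"
    and \<mu>_prob: "prob_space (density lborel (\<lambda>x. ennreal (exp (- U x) * exp (- W x))))"
    and \<phi>U_pos: "\<exists>R0. \<forall>x. norm x \<ge> R0 \<longrightarrow> \<phi> x + (grad U x \<bullet> grad F x) / F x > 0"
  shows "\<exists>C>0. weak_poincare (density lborel (\<lambda>x. ennreal (exp (- U x) * exp (- W x))))
            (\<lambda>s. ennreal C * gen_inv
                 (hU (density lborel (\<lambda>x. ennreal (exp (- W x)))) U
                     (\<lambda>x. \<phi> x + (grad U x \<bullet> grad F x) / F x)) s)"
proof -
  interpret lyapunov_perturbation W U F \<phi> b R
  proof (rule lyapunov_perturbation.intro)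
    show "Ck 1 U" using U_smooth by (rule smooth_imp_Ck1)
    show "F x > 0" for x using F_ge1 by (metis less_le_trans zero_less_one)
    show "LW W F x / F x \<le> - \<phi> x + b * indicator (ball 0 R) x" for x using Lyap by blast
  qed (fact W_C1 F_C2 \<phi>_cont \<mu>_prob \<phi>U_pos less_imp_le[OF b_pos])+
  define \<nu> where "\<nu> = density lborel (\<lambda>x. ennreal (exp (- W x)))"
  obtain K where K: "K > 0" and estimate: "\<And>f r. smooth f \<Longrightarrow> bounded (range f) \<Longrightarrow> 0 < r \<Longrightarrow>
      ennreal (Var \<mu> f) \<le> ennreal (r * K) * (\<integral>\<^sup>+x. ennreal ((norm (grad f x))\<^sup>2) \<partial>\<mu>)
        + emeasure \<mu> {x. \<phi>U x \<le> 1 / r} * ennreal ((Osc f)\<^sup>2)"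
    using variance_estimate by blast
  note \<mu>_le_hU = emeasure_\<mu>_le_hU[folded \<nu>_def]
  have "weak_poincare \<mu> (\<lambda>s. ennreal K * gen_inv (hU \<nu> U \<phi>U) s)"
  proof (rule weak_poincare_gen_inv[OF prob_space_\<mu> _ K])
    show "0 < gen_inv (hU \<nu> U \<phi>U) s" if "s < 1" for s
      using \<mu>_le_hU that by (intro gen_inv_pos[OF prob_space_\<mu>, of \<phi>U]) auto
    show "Var \<mu> f = 0" if "smooth f" "(\<integral>\<^sup>+x. ennreal ((norm (grad f x))\<^sup>2) \<partial>\<mu>) = 0" for f
      using that by (intro Var_density_eq_0_if_energy_eq_0 prob_space_\<mu> continuous_on_\<rho> \<rho>_pos smooth_imp_Ck1)
    show "ennreal (Var \<mu> f) \<le> ennreal (r * K) * (\<integral>\<^sup>+x. ennreal ((norm (grad f x))\<^sup>2) \<partial>\<mu>)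
        + hU \<nu> U \<phi>U r * ennreal ((Osc f)\<^sup>2)" if "smooth f" "bounded (range f)" "0 < r" for f r
      using mult_right_mono[OF \<mu>_le_hU[of r] zero_le, of "ennreal ((Osc f)\<^sup>2)"]
      by (rule order_trans[OF estimate[OF that] add_left_mono])
  qed simp
  then show ?thesis using K unfolding \<nu>_def \<rho>_def[abs_def] \<phi>U_def[abs_def] by blast
qed

end
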